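(* Fix $\eta>0$ and let $X$ be a $d$-uniform $\eta$-spectrally independent complex. Then for every $0\le k\le d$, every $g:X(1)\to[0,1]$, $f=U_{1,k}g$, and every $\varepsilon>0$: \[\Pr[f-\mathbb{E}[f]\ge\varepsilon]\le 4e^{-c_\eta\varepsilon\sqrt{k}}\quad\text{and}\quad\Pr[f-\mathbb{E}[f]\le-\varepsilon]\le 4e^{-c_\eta\varepsilon\sqrt{k}},\] where $c_\eta=\frac{1}{12\max\{1,\sqrt{\eta}\}}$; probabilities and expectations are over $\pi_k$.
   Context: A $d$-uniform simplicial complex $X$ is a finite downward-closed set family with maximal sets of size $d$, $X(j)$ its faces of size $j$, with a full-support distribution $\pi_d$ on $X(d)$ inducing $\pi_j$ on $X(j)$ (draw from $\pi_d$ and take a uniform $j$-subset). The link of $s$ is $X_s=\{t\setminus s:s\subseteq t\in X\}$ with the induced distribution, and its underlying graph has vertices $X_s(1)$ and weighted edges $X_s(2)$. A graph is a $\lambda$-one-sided expander if the second eigenvalue of its normalized adjacency operator is at most $\lambda$. $X$ is $\eta$-spectrally independent if for every $2\le j\le d$ and every $s\in X(d-j)$ the graph underlying $X_s$ is an $\frac{\eta}{j}$-one-sided expander. The lift $U_{1,k}g(s)=\frac{1}{k}\sum_{v\in s}g(v)$ for $s\in X(k)$. *)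

theory Defs
  imports Complex_Main
begin

definition faces :: "'a set set \<Rightarrow> nat \<Rightarrow> 'a set set" where
  "faces X j = {s \<in> X. card s = j}"

definition uniform_complex :: "'a set set \<Rightarrow> nat \<Rightarrow> bool" where
  "uniform_complex X d \<longleftrightarrow> finite X \<and> (\<forall>s\<in>X. finite s)
     \<and> (\<forall>s\<in>X. \<forall>t. t \<subseteq> s \<longrightarrow> t \<in> X)
     \<and> (\<forall>s\<in>X. card s \<le> d)
     \<and> (\<forall>s\<in>X. \<exists>t\<in>X. s \<subseteq> t \<and> card t = d)"

definition full_support_dist :: "'a set set \<Rightarrow> nat \<Rightarrow> ('a set \<Rightarrow> real) \<Rightarrow> bool" where
  "full_support_dist X d p \<longleftrightarrow> (\<forall>s\<in>faces X d. p s > 0) \<and> sum p (faces X d) = 1"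

text \<open>Induced distribution \<pi>_j on X(j): draw from \<pi>_d and take a uniform j-subset.\<close>
definition face_dist :: "'a set set \<Rightarrow> nat \<Rightarrow> ('a set \<Rightarrow> real) \<Rightarrow> nat \<Rightarrow> 'a set \<Rightarrow> real" where
  "face_dist X d p j t = (\<Sum>s\<in>{s \<in> faces X d. t \<subseteq> s}. p s) / real (d choose j)"

definition link_cx :: "'a set set \<Rightarrow> 'a set \<Rightarrow> 'a set set" where
  "link_cx X s = {t - s | t. t \<in> X \<and> s \<subseteq> t}"

definition link_dist :: "'a set set \<Rightarrow> nat \<Rightarrow> ('a set \<Rightarrow> real) \<Rightarrow> 'a set \<Rightarrow> 'a set \<Rightarrow> real" where
  "link_dist X d p s t = p (s \<union> t) / (\<Sum>r\<in>{r \<in> faces X d. s \<subseteq> r}. p r)"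

definition graph_vertices :: "'a set set \<Rightarrow> 'a set" where
  "graph_vertices Y = {v. {v} \<in> Y}"

definition edge_weight :: "'a set set \<Rightarrow> nat \<Rightarrow> ('a set \<Rightarrow> real) \<Rightarrow> 'a \<Rightarrow> 'a \<Rightarrow> real" where
  "edge_weight Y m q u v = (if u \<noteq> v \<and> {u, v} \<in> Y then face_dist Y m q 2 {u, v} else 0)"

definition norm_adj :: "'a set set \<Rightarrow> nat \<Rightarrow> ('a set \<Rightarrow> real) \<Rightarrow> ('a \<Rightarrow> real) \<Rightarrow> 'a \<Rightarrow> real" where
  "norm_adj Y m q f u =
     (\<Sum>v\<in>graph_vertices Y. edge_weight Y m q u v * f v) / (\<Sum>v\<in>graph_vertices Y. edge_weight Y m q u v)"

definition is_eigvec :: "'a set set \<Rightarrow> nat \<Rightarrow> ('a set \<Rightarrow> real) \<Rightarrow> ('a \<Rightarrow> real) \<Rightarrow> real \<Rightarrow> bool" where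
  "is_eigvec Y m q f \<mu> \<longleftrightarrow> (\<forall>u\<in>graph_vertices Y. norm_adj Y m q f u = \<mu> * f u)
      \<and> (\<exists>u\<in>graph_vertices Y. f u \<noteq> 0)"

definition lin_indep2_on :: "'a set \<Rightarrow> ('a \<Rightarrow> real) \<Rightarrow> ('a \<Rightarrow> real) \<Rightarrow> bool" where
  "lin_indep2_on V f g \<longleftrightarrow> (\<forall>a b. (\<forall>u\<in>V. a * f u + b * g u = 0) \<longrightarrow> a = 0 \<and> b = 0)"

text \<open>Second eigenvalue (counted with multiplicity) of the normalized adjacency operator
  is at most \<lambda>: there are no two linearly independent eigenvectors with eigenvalues
  exceeding \<lambda>. (The operator is self-adjoint w.r.t. the degree-weighted inner
  product, hence diagonalizable with real spectrum.)\<close>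
definition one_sided_expander :: "'a set set \<Rightarrow> nat \<Rightarrow> ('a set \<Rightarrow> real) \<Rightarrow> real \<Rightarrow> bool" where
  "one_sided_expander Y m q lam \<longleftrightarrow>
     \<not> (\<exists>f g \<mu>1 \<mu>2. \<mu>1 > lam \<and> \<mu>2 > lam \<and> is_eigvec Y m q f \<mu>1 \<and> is_eigvec Y m q g \<mu>2
          \<and> lin_indep2_on (graph_vertices Y) f g)"

definition spectrally_independent :: "'a set set \<Rightarrow> nat \<Rightarrow> ('a set \<Rightarrow> real) \<Rightarrow> real \<Rightarrow> bool" where
  "spectrally_independent X d p \<eta> \<longleftrightarrow>
     (\<forall>j. 2 \<le> j \<and> j \<le> d \<longrightarrow>
        (\<forall>s\<in>faces X (d - j). one_sided_expander (link_cx X s) j (link_dist X d p s) (\<eta> / real j)))"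

definition lift :: "nat \<Rightarrow> ('a \<Rightarrow> real) \<Rightarrow> 'a set \<Rightarrow> real" where
  "lift k g s = (\<Sum>v\<in>s. g v) / real k"

end

(*
  Write D for the down operator of the complex (averaging over the link of a face) and U for the
  up operator (averaging over the facets of a face); they are adjoint for the measures pi_i.
  Spectral independence says that every link below level m is a gamma-expander with
  gamma = eta / (d - m + 2), and Garland's method turns this into the contraction
  E[(D F)^2] <= (1 - (1 - gamma)^n / (n + 1)) E[F^2] for mean-zero F on level n + 1,
  i.e. a Poincare inequality for the down-up walk.  For the centred lift G on level m, which
  changes by at most 1/m between faces sharing a facet, the Poincare inequality applied to
  exp(t G / 2) gives Lambda(t) (1 - kappa t^2) <= Lambda(t / 2)^2 for Lambda(t) = E exp(t G) with
  kappa of order 1/m, and iterating this halving bounds Lambda(t) by e^(1/2) whenever t^2 <= m/8.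
  With m of order k / max(1, eta) we have m gamma <= 1/7.  The lift on level k is the up-image
  of the lift on level m, so by Jensen the bound holds on level k as well, and Markov's
  inequality with t = c_eta sqrt k gives the upper tail; the lower tail is the upper tail of 1 - g.
*)

theory Submission
  imports Defs "HOL-Analysis.Analysis"
begin

section \<open>Rayleigh quotients of weighted symmetric forms\<close>

lemma quadratic_nonpos_imp_linear_coeff_zero:
  fixes a b :: real
  assumes "\<And>t. a * t + b * t^2 \<le> 0"
  shows "a = 0"
proof -
  define B where "B = \<bar>b\<bar> + 1"
  have B: "B > 0" "B + b > 0" unfolding B_def by auto
  have "a * (a / B) + b * (a / B)^2 = a^2 * (B + b) / B^2"
    using B by (simp add: field_simps power2_eq_square)
  then have "a^2 * (B + b) \<le> 0"
    using assms[of "a / B"] B by (simp add: divide_le_0_iff)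
  then have "a^2 \<le> 0" using B by (simp add: mult_le_0_iff)
  then show ?thesis by simp
qed

lemma compact_supported_box:
  fixes V :: "'a set" and R :: real
  shows "compact {x::'a \<Rightarrow> real. \<forall>v. x v \<in> (if v \<in> V then {-R..R} else {0})}"
proof -
  let ?B = "\<lambda>v. if v \<in> V then {-R..R} else {0::real}"
  have eq: "{x::'a \<Rightarrow> real. \<forall>v. x v \<in> ?B v} = PiE UNIV ?B"
    by (auto simp: PiE_def Pi_def extensional_def)
  have "compactin (product_topology (\<lambda>i. euclidean) UNIV) (PiE UNIV ?B)"
    by (subst compactin_PiE) auto
  then show ?thesis
    by (simp only: eq euclidean_product_topology compactin_euclidean_iff)
qed
locale symmetric_form =
  fixes V :: "'a set" and z :: "'a \<Rightarrow> real" and W :: "'a \<Rightarrow> 'a \<Rightarrow> real"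
  assumes finite_V: "finite V"
    and weight_pos: "\<And>a. a \<in> V \<Longrightarrow> z a > 0"
    and W_sym: "\<And>a b. a \<in> V \<Longrightarrow> b \<in> V \<Longrightarrow> W a b = W b a"
begin

definition total :: "('a \<Rightarrow> real) \<Rightarrow> real" where
  "total x = (\<Sum>a\<in>V. z a * x a)"

definition sqnorm :: "('a \<Rightarrow> real) \<Rightarrow> real" where
  "sqnorm x = (\<Sum>a\<in>V. z a * (x a)^2)"

definition qform :: "('a \<Rightarrow> real) \<Rightarrow> real" where
  "qform x = (\<Sum>a\<in>V. \<Sum>b\<in>V. W a b * x a * x b)"

lemma sqnorm_nonneg: "sqnorm x \<ge> 0"
  unfolding sqnorm_def by (intro sum_nonneg) (simp add: less_imp_le weight_pos)

lemma sqnorm_eq_0_imp: assumes "sqnorm x = 0" "a \<in> V" shows "x a = 0"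
proof -
  have "\<forall>a\<in>V. z a * (x a)^2 = 0"
    using assms(1) unfolding sqnorm_def
    by (subst sum_nonneg_eq_0_iff[OF finite_V, symmetric]) (auto simp: less_imp_le weight_pos)
  then show ?thesis using assms(2) weight_pos[OF assms(2)] by auto
qed

lemma sqnorm_pos_iff: "sqnorm x > 0 \<longleftrightarrow> (\<exists>a\<in>V. x a \<noteq> 0)"
proof
  assume "sqnorm x > 0"
  show "\<exists>a\<in>V. x a \<noteq> 0"
  proof (rule ccontr)
    assume "\<not> (\<exists>a\<in>V. x a \<noteq> 0)"
    then have "sqnorm x = 0" unfolding sqnorm_def by simp
    with \<open>sqnorm x > 0\<close> show False by simp
  qed
next
  assume "\<exists>a\<in>V. x a \<noteq> 0"
  then show "sqnorm x > 0" using sqnorm_nonneg sqnorm_eq_0_imp by (metis order_less_le)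
qed

lemma forms_divide: "total (\<lambda>v. x v / r) = total x / r" "sqnorm (\<lambda>v. x v / r) = sqnorm x / r^2"
  "qform (\<lambda>v. x v / r) = qform x / r^2"
  unfolding total_def sqnorm_def qform_def
  by (simp_all add: sum_divide_distrib power_divide power2_eq_square)

lemma forms_cong:
  assumes "\<And>v. v \<in> V \<Longrightarrow> x v = y v"
  shows "total x = total y" "sqnorm x = sqnorm y" "qform x = qform y"
  unfolding total_def sqnorm_def qform_def using assms by simp_all

lemma qform_add:
  "qform (\<lambda>v. x v + t * y v) = qform x + 2 * t * (\<Sum>a\<in>V. \<Sum>b\<in>V. W a b * x a * y b) + t^2 * qform y"
proof -
  have swap: "(\<Sum>a\<in>V. \<Sum>b\<in>V. W a b * y a * x b) = (\<Sum>a\<in>V. \<Sum>b\<in>V. W a b * x a * y b)"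
    by (subst sum.swap) (intro sum.cong refl, simp add: W_sym)
  have "qform (\<lambda>v. x v + t * y v) = qform x + t * (\<Sum>a\<in>V. \<Sum>b\<in>V. W a b * x a * y b)
      + t * (\<Sum>a\<in>V. \<Sum>b\<in>V. W a b * y a * x b) + t^2 * qform y"
  proof -
    have "W a b * (x a + t * y a) * (x b + t * y b) = W a b * x a * x b + t * (W a b * x a * y b)
        + t * (W a b * y a * x b) + t^2 * (W a b * y a * y b)" for a b
      by (simp add: algebra_simps power2_eq_square)
    then show ?thesis unfolding qform_def by (simp add: sum.distrib sum_distrib_left)
  qed
  then show ?thesis unfolding swap by simp
qed

lemma sqnorm_add:
  "sqnorm (\<lambda>v. x v + t * y v) = sqnorm x + 2 * t * (\<Sum>a\<in>V. z a * x a * y a) + t^2 * sqnorm y"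
  unfolding sqnorm_def by (simp add: algebra_simps sum.distrib sum_distrib_left power2_eq_square)

lemma total_add: "total (\<lambda>v. x v + t * y v) = total x + t * total y"
  unfolding total_def by (simp add: algebra_simps sum.distrib sum_distrib_left)

definition box_radius :: real where
  "box_radius = 1 + (\<Sum>v\<in>V. 1 / z v)"

lemma sqnorm_le_1_imp_in_box:
  assumes "sqnorm x \<le> 1" "v \<in> V"
  shows "x v \<in> {-box_radius..box_radius}"
proof -
  have R1: "box_radius \<ge> 1"
    unfolding box_radius_def by (auto intro!: sum_nonneg simp: less_imp_le weight_pos)
  have "z v * (x v)^2 \<le> sqnorm x"
    unfolding sqnorm_def using assms(2) finite_V
    by (intro member_le_sum) (auto simp: less_imp_le weight_pos)
  then have "(x v)^2 \<le> 1 / z v" using assms weight_pos[OF assms(2)] by (simp add: field_simps)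
  also have "1 / z v \<le> (\<Sum>v\<in>V. 1 / z v)"
    using assms(2) finite_V by (intro member_le_sum) (auto simp: less_imp_le weight_pos)
  also have "\<dots> \<le> box_radius" unfolding box_radius_def by simp
  also have "\<dots> \<le> box_radius^2"
    using mult_right_mono[OF R1, of box_radius] R1 by (simp add: power2_eq_square)
  finally have "\<bar>x v\<bar> \<le> box_radius" using R1 by (simp add: power2_le_iff_abs_le)
  then show ?thesis by auto
qed

lemma normalise_forms:
  assumes "sqnorm y > 0"
  defines "y' \<equiv> \<lambda>v. if v \<in> V then y v / sqrt (sqnorm y) else 0"
  shows "total y' = total y / sqrt (sqnorm y)" "sqnorm y' = 1" "qform y' = qform y / sqnorm y"
proof -
  note eq = forms_cong[where x = y' and y = "\<lambda>v. y v / sqrt (sqnorm y)"]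
  show "total y' = total y / sqrt (sqnorm y)"
    by (subst eq) (simp_all add: y'_def forms_divide)
  show "sqnorm y' = 1"
    by (subst eq) (use assms(1) in \<open>simp_all add: y'_def forms_divide\<close>)
  show "qform y' = qform y / sqnorm y"
    by (subst eq) (use assms(1) in \<open>simp_all add: y'_def forms_divide\<close>)
qed

lemma constrained_maximiser_exists:
  assumes "total h = 0" "sqnorm h > 0"
  obtains x where "total x = 0" "sqnorm x = 1"
    "\<And>y. total y = 0 \<Longrightarrow> qform y \<le> qform x * sqnorm y"
proof -
  define K where "K = {x. \<forall>v. x v \<in> (if v \<in> V then {-box_radius..box_radius} else {0})}
    \<inter> {x. total x = 0} \<inter> {x. sqnorm x = 1}"
  have cont: "continuous_on UNIV total" "continuous_on UNIV sqnorm" "continuous_on UNIV qform"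
    unfolding total_def sqnorm_def qform_def
    by (intro continuous_intros continuous_on_product_coordinates)+
  have "compact K"
    unfolding K_def
    by (intro compact_Int_closed compact_supported_box closed_Collect_eq cont[THEN continuous_on_subset])
      auto
  have in_K: "(\<lambda>v. if v \<in> V then y v / sqrt (sqnorm y) else 0) \<in> K" (is "?y' \<in> K")
    if "total y = 0" "sqnorm y > 0" for y
    using normalise_forms[OF that(2)] that sqnorm_le_1_imp_in_box[of ?y'] unfolding K_def by auto
  then have "K \<noteq> {}" using assms by blast
  then obtain x where "x \<in> K" and x_max: "\<And>y. y \<in> K \<Longrightarrow> qform y \<le> qform x"
    using continuous_attains_sup[OF \<open>compact K\<close> _ continuous_on_subset[OF cont(3)]] by blast
  have "qform y \<le> qform x * sqnorm y" if "total y = 0" for y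
  proof (cases "sqnorm y = 0")
    case True
    then show ?thesis unfolding qform_def using sqnorm_eq_0_imp[OF True] by simp
  next
    case False
    then have "sqnorm y > 0" using sqnorm_nonneg[of y] by simp
    with x_max[OF in_K[OF that]] normalise_forms(3)[OF this] show ?thesis
      by (simp add: field_simps)
  qed
  moreover have "total x = 0" "sqnorm x = 1" using \<open>x \<in> K\<close> unfolding K_def by auto
  ultimately show ?thesis using that by blast
qed

text \<open>First-order optimality: perturbing \<open>x\<close> inside the hyperplane \<open>total = 0\<close> shows that the
  residual \<open>e = W x - \<mu> z x\<close> is orthogonal to that hyperplane, and the row sums put \<open>e / z\<close>
  into it, so \<open>e = 0\<close>.\<close>
lemma constrained_maximiser_eigenvector:
  assumes rows: "\<And>a. a \<in> V \<Longrightarrow> (\<Sum>b\<in>V. W a b) = \<kappa> * z a"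
    and x0: "total x = 0" and max: "\<And>y. total y = 0 \<Longrightarrow> qform y \<le> \<mu> * sqnorm y"
    and attained: "qform x = \<mu> * sqnorm x"
    and a: "a \<in> V"
  shows "(\<Sum>b\<in>V. W a b * x b) = \<mu> * z a * x a"
proof -
  define e where "e a = (\<Sum>b\<in>V. W a b * x b) - \<mu> * z a * x a" for a
  have orth: "(\<Sum>a\<in>V. y a * e a) = 0" if "total y = 0" for y
  proof -
    define B where "B = (\<Sum>a\<in>V. \<Sum>b\<in>V. W a b * x a * y b)"
    define C where "C = (\<Sum>a\<in>V. z a * x a * y a)"
    have "B - \<mu> * C = 0"
    proof (rule quadratic_nonpos_imp_linear_coeff_zero[where b = "(qform y - \<mu> * sqnorm y) / 2"])
      fix t
      have "qform (\<lambda>v. x v + t * y v) \<le> \<mu> * sqnorm (\<lambda>v. x v + t * y v)"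
        using max total_add x0 that by simp
      then show "(B - \<mu> * C) * t + (qform y - \<mu> * sqnorm y) / 2 * t^2 \<le> 0"
        using attained unfolding qform_add sqnorm_add B_def[symmetric] C_def[symmetric]
        by (simp add: algebra_simps field_simps)
    qed
    moreover have "B = (\<Sum>b\<in>V. y b * (\<Sum>a\<in>V. W b a * x a))"
      unfolding B_def
      by (subst sum.swap) (simp add: sum_distrib_left W_sym mult.commute mult.left_commute)
    ultimately show ?thesis
      unfolding e_def C_def by (simp add: algebra_simps sum_subtractf sum_distrib_left)
  qed
  define w where "w a = e a / z a" for a
  have "total w = (\<Sum>a\<in>V. \<Sum>b\<in>V. W a b * x b) - \<mu> * total x"
    unfolding total_def w_def e_def
    by (simp add: weight_pos less_imp_neq[symmetric] sum_subtractf sum_distrib_left mult.assoc)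
  also have "(\<Sum>a\<in>V. \<Sum>b\<in>V. W a b * x b) = (\<Sum>b\<in>V. x b * (\<Sum>a\<in>V. W b a))"
    by (subst sum.swap) (simp add: sum_distrib_left W_sym mult.commute)
  also have "\<dots> = \<kappa> * total x"
    unfolding total_def by (simp add: rows sum_distrib_left mult.commute mult.left_commute)
  finally have "total w = 0" using x0 by simp
  then have "(\<Sum>a\<in>V. (e a)^2 / z a) = 0"
    using orth[of w] unfolding w_def by (simp add: power2_eq_square mult.commute)
  then have "\<forall>a\<in>V. (e a)^2 / z a = 0"
    by (subst sum_nonneg_eq_0_iff[OF finite_V, symmetric]) (auto simp: less_imp_le weight_pos)
  then have "e a = 0" using a weight_pos[OF a] by auto
  then show ?thesis unfolding e_def by simp
qed

lemma eigenvector_above_rayleigh_quotient: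
  assumes rows: "\<And>a. a \<in> V \<Longrightarrow> (\<Sum>b\<in>V. W a b) = \<kappa> * z a"
    and "total h = 0" and "qform h > c * sqnorm h"
  obtains x \<mu> where "total x = 0" "\<exists>a\<in>V. x a \<noteq> 0" "\<mu> > c"
    "\<And>a. a \<in> V \<Longrightarrow> (\<Sum>b\<in>V. W a b * x b) = \<mu> * z a * x a"
proof -
  have "sqnorm h > 0"
  proof (rule ccontr)
    assume "\<not> sqnorm h > 0"
    then have "sqnorm h = 0" using sqnorm_nonneg[of h] by simp
    then show False using assms(3) sqnorm_eq_0_imp[of h] unfolding qform_def by simp
  qed
  obtain x where x: "total x = 0" "sqnorm x = 1"
    and max: "\<And>y. total y = 0 \<Longrightarrow> qform y \<le> qform x * sqnorm y"
    using constrained_maximiser_exists[OF assms(2) \<open>sqnorm h > 0\<close>] by blast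
  have "c * sqnorm h < qform x * sqnorm h" using assms(3) max[OF assms(2)] by simp
  then have "qform x > c" using \<open>sqnorm h > 0\<close> by simp
  moreover have "(\<Sum>b\<in>V. W a b * x b) = qform x * z a * x a" if "a \<in> V" for a
    using constrained_maximiser_eigenvector[OF rows x(1) _ _ that, of "qform x"] max x(2) by simp
  ultimately show ?thesis using that x sqnorm_pos_iff[of x] by simp
qed

text \<open>Split \<open>h\<close> into its weighted mean and a part of total zero.\<close>
lemma qform_le_with_mean:
  assumes rows: "\<And>a. a \<in> V \<Longrightarrow> (\<Sum>b\<in>V. W a b) = \<kappa> * z a" and "V \<noteq> {}"
    and bound0: "\<And>y. total y = 0 \<Longrightarrow> qform y \<le> \<kappa> * \<gamma> * sqnorm y"
  shows "qform h \<le> \<kappa> * (\<gamma> * sqnorm h + (1 - \<gamma>) * (total h)^2 / total (\<lambda>_. 1))"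
proof -
  define T where "T = total (\<lambda>_. 1)"
  have "T > 0" unfolding T_def total_def using finite_V \<open>V \<noteq> {}\<close> weight_pos by (intro sum_pos) auto
  define c where "c = total h / T"
  define h0 where "h0 a = h a - c" for a
  have h: "h = (\<lambda>a. h0 a + c * 1)" unfolding h0_def by simp
  have "total h0 = total h - c * T"
    unfolding total_def h0_def T_def by (simp add: algebra_simps sum_subtractf sum_distrib_left)
  then have total0: "total h0 = 0" unfolding c_def using \<open>T > 0\<close> by simp
  have "(\<Sum>b\<in>V. W a b * h0 a * 1) = \<kappa> * (z a * h0 a)" if "a \<in> V" for a
  proof -
    have "(\<Sum>b\<in>V. W a b * h0 a * 1) = h0 a * (\<Sum>b\<in>V. W a b)" by (simp add: sum_distrib_left mult.commute)
    then show ?thesis using rows[OF that] by simp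
  qed
  then have "(\<Sum>a\<in>V. \<Sum>b\<in>V. W a b * h0 a * 1) = \<kappa> * total h0"
    unfolding total_def by (simp add: sum_distrib_left)
  moreover have "qform (\<lambda>_. 1) = \<kappa> * T"
    unfolding qform_def T_def total_def by (simp add: rows sum_distrib_left)
  moreover have "sqnorm (\<lambda>_. 1) = T" unfolding sqnorm_def T_def total_def by simp
  moreover have "(\<Sum>a\<in>V. z a * h0 a * 1) = 0" using total0 unfolding total_def by simp
  ultimately have "qform h \<le> \<kappa> * (\<gamma> * sqnorm h + (1 - \<gamma>) * (c^2 * T))"
    using bound0[OF total0] total0 unfolding h qform_add sqnorm_add by (simp add: algebra_simps)
  also have "c^2 * T = (total h)^2 / T" unfolding c_def using \<open>T > 0\<close> by (simp add: power2_eq_square)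
  finally show ?thesis unfolding T_def by (simp only: times_divide_eq_right)
qed

end

lemma square_sum_eq_diag_plus_cross:
  fixes f :: "'b \<Rightarrow> real"
  assumes "finite A"
  shows "(\<Sum>a\<in>A. f a)^2 = (\<Sum>a\<in>A. (f a)^2) + (\<Sum>a\<in>A. \<Sum>b\<in>A - {a}. f a * f b)"
proof -
  have "(\<Sum>a\<in>A. f a)^2 = (\<Sum>a\<in>A. \<Sum>b\<in>A. f a * f b)"
    unfolding power2_eq_square by (rule sum_product)
  also have "\<dots> = (\<Sum>a\<in>A. (f a)^2 + (\<Sum>b\<in>A - {a}. f a * f b))"
    using assms by (intro sum.cong refl) (simp add: sum.remove power2_eq_square)
  finally show ?thesis by (simp add: sum.distrib)
qed

lemma weighted_variance_eq_pairs:
  fixes w h :: "'b \<Rightarrow> real"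
  assumes "(\<Sum>a\<in>V. w a) = 1"
  shows "(\<Sum>a\<in>V. w a * (h a)^2) - (\<Sum>a\<in>V. w a * h a)^2 = (\<Sum>a\<in>V. \<Sum>b\<in>V. w a * w b * (h a - h b)^2) / 2"
proof -
  have "(\<Sum>a\<in>V. \<Sum>b\<in>V. w a * w b * (h a - h b)^2)
      = (\<Sum>a\<in>V. \<Sum>b\<in>V. (w a * (h a)^2) * w b + w a * (w b * (h b)^2) - 2 * ((w a * h a) * (w b * h b)))"
    by (intro sum.cong refl) (simp add: power2_eq_square algebra_simps)
  also have "\<dots> = (\<Sum>a\<in>V. \<Sum>b\<in>V. (w a * (h a)^2) * w b) + (\<Sum>a\<in>V. \<Sum>b\<in>V. w a * (w b * (h b)^2))
      - 2 * (\<Sum>a\<in>V. \<Sum>b\<in>V. (w a * h a) * (w b * h b))"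
    by (simp only: sum.distrib sum_subtractf sum_distrib_left[symmetric])
  also have "(\<Sum>a\<in>V. \<Sum>b\<in>V. (w a * (h a)^2) * w b) = (\<Sum>a\<in>V. w a * (h a)^2) * (\<Sum>b\<in>V. w b)"
    by (rule sum_product[symmetric])
  also have "(\<Sum>a\<in>V. \<Sum>b\<in>V. w a * (w b * (h b)^2)) = (\<Sum>a\<in>V. w a) * (\<Sum>b\<in>V. w b * (h b)^2)"
    by (rule sum_product[symmetric])
  also have "(\<Sum>a\<in>V. \<Sum>b\<in>V. (w a * h a) * (w b * h b)) = (\<Sum>a\<in>V. w a * h a) * (\<Sum>b\<in>V. w b * h b)"
    by (rule sum_product[symmetric])
  finally show ?thesis using assms by (simp add: power2_eq_square)
qed

lemma weighted_variance_le:
  fixes w h e :: "'b \<Rightarrow> real"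
  assumes "(\<Sum>a\<in>V. w a) = 1" "\<And>a. a \<in> V \<Longrightarrow> w a \<ge> 0"
    and "\<And>a b. a \<in> V \<Longrightarrow> b \<in> V \<Longrightarrow> (h a - h b)^2 \<le> K * (e a + e b)"
  shows "(\<Sum>a\<in>V. w a * (h a)^2) - (\<Sum>a\<in>V. w a * h a)^2 \<le> K * (\<Sum>a\<in>V. w a * e a)"
proof -
  have "(\<Sum>a\<in>V. \<Sum>b\<in>V. w a * w b * (h a - h b)^2) \<le> (\<Sum>a\<in>V. \<Sum>b\<in>V. w a * w b * (K * (e a + e b)))"
    using assms(2,3) by (intro sum_mono mult_left_mono) auto
  also have "\<dots> = K * ((\<Sum>a\<in>V. w a * e a) * (\<Sum>b\<in>V. w b) + (\<Sum>a\<in>V. w a) * (\<Sum>b\<in>V. w b * e b))"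
  proof -
    have "(\<Sum>a\<in>V. \<Sum>b\<in>V. w a * w b * (K * (e a + e b)))
        = K * (\<Sum>a\<in>V. \<Sum>b\<in>V. (w a * e a) * w b + w a * (w b * e b))"
      by (simp add: sum_distrib_left algebra_simps)
    also have "\<dots> = K * ((\<Sum>a\<in>V. \<Sum>b\<in>V. (w a * e a) * w b) + (\<Sum>a\<in>V. \<Sum>b\<in>V. w a * (w b * e b)))"
      by (simp only: sum.distrib)
    finally show ?thesis by (simp only: sum_product[symmetric])
  qed
  also have "\<dots> = 2 * K * (\<Sum>a\<in>V. w a * e a)" using assms(1) by simp
  finally show ?thesis unfolding weighted_variance_eq_pairs[OF assms(1)] by simp
qed

lemma exp_le_quadratic:
  fixes x :: real assumes "\<bar>x\<bar> \<le> 1" shows "exp x \<le> 1 + x + x^2"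
proof (cases "x \<ge> 0")
  case True then show ?thesis using exp_bound[of x] assms by simp
next
  case False
  define u where "u = -x"
  have u: "0 < u" "u \<le> 1" using False assms by (auto simp: u_def)
  have e: "exp u \<ge> 1 + u" by simp
  have "exp x = 1 / exp u" by (simp add: u_def exp_minus field_simps)
  also have "\<dots> \<le> 1 / (1 + u)" using e u by (intro divide_left_mono) auto
  finally have "exp x \<le> 1 / (1 + u)" .
  also have "1 / (1 + u) \<le> 1 - u + u^2"
  proof -
    have "1 \<le> (1 - u + u^2) * (1 + u)" using u by (simp add: algebra_simps power2_eq_square power3_eq_cube)
    then show ?thesis using u by (simp add: field_simps)
  qed
  finally show ?thesis by (simp add: u_def)
qed

lemma exp_diff_square_le:
  fixes x y :: real
  shows "(exp x - exp y)^2 \<le> (x - y)^2 * (exp (2 * x) + exp (2 * y))"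
proof -
  have key: "(exp x - exp y)^2 \<le> (x - y)^2 * exp (2 * x)" if "y \<le> x" for x y :: real
  proof -
    have "1 + (y - x) \<le> exp (y - x)" by simp
    then have "1 - exp (y - x) \<le> x - y" by linarith
    then have "exp x * (1 - exp (y - x)) \<le> exp x * (x - y)" by (intro mult_left_mono) auto
    then have a: "exp x - exp y \<le> exp x * (x - y)" by (simp add: exp_diff algebra_simps)
    have b: "0 \<le> exp x - exp y" using that by simp
    have "(exp x - exp y)^2 \<le> (exp x * (x - y))^2" using a b by (intro power_mono) auto
    also have "\<dots> = (x - y)^2 * (exp x)^2" by (simp add: power_mult_distrib mult.commute)
    also have "(exp x)^2 = exp (2 * x)" by (simp add: exp_double)
    finally show ?thesis .
  qed
  show ?thesis
  proof (cases "y \<le> x")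
    case True
    have "(x - y)^2 * exp (2 * x) \<le> (x - y)^2 * (exp (2 * x) + exp (2 * y))"
      by (intro mult_left_mono) auto
    then show ?thesis using key[OF True] by linarith
  next
    case False
    then have k: "(exp y - exp x)^2 \<le> (y - x)^2 * exp (2 * y)" using key[of x y] by simp
    have m: "(y - x)^2 * exp (2 * y) \<le> (y - x)^2 * (exp (2 * x) + exp (2 * y))"
      by (intro mult_left_mono) auto
    have "(exp x - exp y)^2 = (exp y - exp x)^2" by (simp add: power2_commute)
    also have "\<dots> \<le> (y - x)^2 * (exp (2 * x) + exp (2 * y))" using k m by linarith
    also have "(y - x)^2 = (x - y)^2" by (simp add: power2_commute)
    finally show ?thesis .
  qed
qed

lemma inverse_one_minus_le_exp:
  fixes x :: real assumes "0 \<le> x" "x \<le> 1/2" shows "1 / (1 - x) \<le> exp (2 * x)"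
proof -
  have "- x - 2 * x^2 \<le> ln (1 - x)" by (rule ln_one_minus_pos_lower_bound[OF assms])
  moreover have "-2 * x \<le> - x - 2 * x^2"
  proof -
    have "(2 * x) * x \<le> 1 * x" using assms by (intro mult_right_mono) auto
    then show ?thesis by (simp add: power2_eq_square)
  qed
  ultimately have "-2 * x \<le> ln (1 - x)" by simp
  then have "exp (-2 * x) \<le> exp (ln (1 - x))" by simp
  also have "exp (ln (1 - x)) = 1 - x" using assms by simp
  finally have e: "exp (-2 * x) \<le> 1 - x" .
  have "exp (2 * x) = 1 / exp (-2 * x)" by (simp add: exp_minus field_simps)
  also have "1 / (1 - x) \<le> 1 / exp (-2 * x)" using e assms by (intro divide_left_mono) auto
  ultimately show ?thesis by simp
qed

lemma halving_step_le:
  fixes \<Lambda> :: "real \<Rightarrow> real"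
  assumes "\<Lambda> t * (1 - \<kappa> * t^2) \<le> (\<Lambda> (t / 2))^2" "0 \<le> \<kappa> * t^2" "\<kappa> * t^2 \<le> 1/2"
  shows "\<Lambda> t \<le> exp (2 * (\<kappa> * t^2)) * (\<Lambda> (t / 2))^2"
proof -
  have "\<Lambda> t \<le> (\<Lambda> (t / 2))^2 * (1 / (1 - \<kappa> * t^2))" using assms by (simp add: field_simps)
  also have "\<dots> \<le> (\<Lambda> (t / 2))^2 * exp (2 * (\<kappa> * t^2))"
    using inverse_one_minus_le_exp[of "\<kappa> * t^2"] assms(2,3) by (intro mult_left_mono) auto
  finally show ?thesis by (simp add: mult.commute)
qed

lemma halving_recursion_bound:
  fixes \<Lambda> :: "real \<Rightarrow> real"
  assumes rec: "\<And>t. \<Lambda> t * (1 - \<kappa> * t^2) \<le> (\<Lambda> (t / 2))^2"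
    and nonneg: "\<And>t. \<Lambda> t \<ge> 0" and "\<kappa> \<ge> 0" and "\<kappa> * t^2 \<le> 1/2"
  shows "\<Lambda> t \<le> exp (4 * \<kappa> * t^2) * (\<Lambda> (t / 2^n))^(2^n)"
  using assms(4)
proof (induction n arbitrary: t)
  case 0
  have "1 * \<Lambda> t \<le> exp (4 * \<kappa> * t^2) * \<Lambda> t"
    using nonneg[of t] \<open>\<kappa> \<ge> 0\<close> by (intro mult_right_mono) auto
  then show ?case by simp
next
  case (Suc n)
  have q: "4 * \<kappa> * (t / 2)^2 = \<kappa> * t^2" by (simp add: power_divide)
  have "0 \<le> \<kappa> * t^2" using \<open>\<kappa> \<ge> 0\<close> by simp
  then have "\<kappa> * (t / 2)^2 \<le> 1/2" using q Suc.prems by linarith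
  then have "\<Lambda> (t / 2) \<le> exp (4 * \<kappa> * (t / 2)^2) * (\<Lambda> (t / 2 / 2^n))^(2^n)" by (rule Suc.IH)
  then have "\<Lambda> (t / 2) \<le> exp (\<kappa> * t^2) * (\<Lambda> (t / 2^Suc n))^(2^n)" unfolding q by simp
  then have "(\<Lambda> (t / 2))^2 \<le> (exp (\<kappa> * t^2) * (\<Lambda> (t / 2^Suc n))^(2^n))^2"
    using nonneg by (intro power_mono) auto
  also have "\<dots> = exp (2 * (\<kappa> * t^2)) * (\<Lambda> (t / 2^Suc n))^(2^Suc n)"
    by (simp add: power_mult_distrib power_mult[symmetric] mult.commute flip: exp_double)
  finally have "exp (2 * (\<kappa> * t^2)) * (\<Lambda> (t / 2))^2
      \<le> exp (2 * (\<kappa> * t^2)) * (exp (2 * (\<kappa> * t^2)) * (\<Lambda> (t / 2^Suc n))^(2^Suc n))"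
    by (rule mult_left_mono) simp
  with halving_step_le[OF rec \<open>0 \<le> \<kappa> * t^2\<close> Suc.prems] show ?case
    by (simp add: mult.assoc[symmetric] flip: exp_add)
qed

lemma squaring_recursion_le_exp_half:
  fixes \<Lambda> :: "real \<Rightarrow> real"
  assumes rec: "\<And>t. \<Lambda> t * (1 - \<kappa> * t^2) \<le> (\<Lambda> (t / 2))^2" and nn: "\<And>t. \<Lambda> t \<ge> 0" and "\<kappa> \<ge> 0"
    and small: "\<And>s. \<bar>s\<bar> \<le> 1 \<Longrightarrow> \<Lambda> s \<le> 1 + s^2"
    and "t \<ge> 0" and "\<kappa> * t^2 \<le> 1/16"
  shows "\<Lambda> t \<le> exp (1/2)"
proof -
  obtain N where N: "4 * t^2 + 1 < 2^N" using real_arch_pow[of "2::real" "4 * t^2 + 1"] by auto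
  define s where "s = t / 2^N"
  have "\<Lambda> t \<le> exp (4 * \<kappa> * t^2) * (\<Lambda> s)^(2^N)"
    unfolding s_def by (rule halving_recursion_bound[OF rec nn \<open>\<kappa> \<ge> 0\<close>]) (use assms(6) in simp)
  moreover have "(\<Lambda> s)^(2^N) \<le> exp (1/4)"
  proof -
    have "0 \<le> (t - 1/2) * (t - 1/2)" by simp
    then have "t \<le> t * t + 1/4" by (simp add: algebra_simps)
    moreover have "4 * (t * t) + 1 < 2^N" using N by (simp add: power2_eq_square)
    ultimately have "t < 2^N" using zero_le_square[of t] by linarith
    then have "\<bar>s\<bar> \<le> 1" unfolding s_def using \<open>t \<ge> 0\<close> by simp
    then have "(\<Lambda> s)^(2^N) \<le> (1 + s^2)^(2^N)" using small nn by (intro power_mono) auto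
    also have "\<dots> \<le> (exp (s^2))^(2^N)" by (intro power_mono) auto
    also have "\<dots> = exp (t^2 / 2^N)"
      unfolding s_def exp_of_nat_mult[symmetric] by (simp add: power_divide power2_eq_square)
    also have "\<dots> \<le> exp (1/4)" using N by (simp add: field_simps)
    finally show ?thesis .
  qed
  ultimately have "\<Lambda> t \<le> exp (4 * \<kappa> * t^2) * exp (1/4)"
    by (meson exp_ge_zero mult_left_mono order_trans)
  also have "\<dots> \<le> exp (1/4) * exp (1/4)" using assms(6) by (intro mult_right_mono) auto
  also have "\<dots> = exp (1/2)" by (simp flip: exp_add)
  finally show ?thesis .
qed

lemma link_parameter_bounds:
  fixes m d :: nat and \<eta> :: real
  assumes "2 \<le> m" "0 \<le> \<eta>" "8 * real m * max 1 \<eta> \<le> real d"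
  shows "0 \<le> \<eta> / real (d - m + 2)" "\<eta> / real (d - m + 2) < 1" "(1 - \<eta> / real (d - m + 2))^(m - 1) \<ge> 6/7"
proof -
  define \<gamma> where "\<gamma> = \<eta> / real (d - m + 2)"
  have "8 * real m \<le> real d" "8 * (real m * \<eta>) \<le> real d"
    using assms(3) mult_left_mono[of 1 "max 1 \<eta>" "8 * real m"] mult_left_mono[of \<eta> "max 1 \<eta>" "8 * real m"]
    by auto
  then have D: "real (d - m + 2) = real d - real m + 2" by (simp add: of_nat_diff)
  then have "7 * (real m * \<eta>) \<le> real (d - m + 2)"
    using \<open>8 * real m \<le> real d\<close> \<open>8 * (real m * \<eta>) \<le> real d\<close> by linarith
  then have m\<gamma>: "real m * \<gamma> \<le> 1/7" unfolding \<gamma>_def using D \<open>8 * real m \<le> real d\<close>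
    by (simp add: field_simps)
  show "0 \<le> \<eta> / real (d - m + 2)" using assms(2) by simp
  then have "0 \<le> \<gamma>" unfolding \<gamma>_def .
  then have "1 * \<gamma> \<le> real m * \<gamma>" using assms(1) by (intro mult_right_mono) auto
  then have "\<gamma> \<le> real m * \<gamma>" by simp
  then show "\<eta> / real (d - m + 2) < 1" using m\<gamma> unfolding \<gamma>_def[symmetric] by linarith
  have "1 + real (m - 1) * (- \<gamma>) \<le> (1 + - \<gamma>)^(m - 1)"
    using \<open>\<gamma> \<le> real m * \<gamma>\<close> m\<gamma> by (intro Bernoulli_inequality) simp
  moreover have "real (m - 1) * \<gamma> \<le> real m * \<gamma>"
    using \<open>0 \<le> \<gamma>\<close> by (intro mult_right_mono) auto
  ultimately show "(1 - \<eta> / real (d - m + 2))^(m - 1) \<ge> 6/7" using m\<gamma> unfolding \<gamma>_def[symmetric] by simp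
qed

lemma exists_lift_level:
  fixes k :: nat and M :: real
  assumes "1 \<le> M" "144 * M^2 < real k"
  obtains m :: nat where "2 \<le> m" "8 * real m * M^2 \<le> real k" "real k / (144 * M^2) \<le> real m / 8"
proof
  define x where "x = real k / (8 * M^2)"
  have "M^2 \<ge> 1" using assms(1) by (simp add: one_le_power)
  have "0 < 8 * M^2" using assms(1) by simp
  then have "x > 18" unfolding x_def using assms(2) by (subst pos_less_divide_eq) simp_all
  show "2 \<le> nat \<lfloor>x\<rfloor>" using \<open>x > 18\<close> by linarith
  have "8 * real (nat \<lfloor>x\<rfloor>) * M^2 \<le> 8 * x * M^2"
    using \<open>x > 18\<close> by (intro mult_right_mono) (linarith, simp)
  also have "\<dots> = real k" unfolding x_def using \<open>0 < 8 * M^2\<close> by simp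
  finally show "8 * real (nat \<lfloor>x\<rfloor>) * M^2 \<le> real k" .
  have "real k / (144 * M^2) = x / 18" unfolding x_def by (simp add: field_simps)
  also have "\<dots> \<le> (x - 1) / 8" using \<open>x > 18\<close> by simp
  also have "\<dots> \<le> real (nat \<lfloor>x\<rfloor>) / 8"
    using \<open>x > 18\<close> by (intro divide_right_mono) linarith+
  finally show "real k / (144 * M^2) \<le> real (nat \<lfloor>x\<rfloor>) / 8" .
qed

section \<open>Weighted complexes and the down-up walk\<close>

lemma Suc_mult_choose_Suc: "real (Suc i) * real (d choose Suc i) = real (d - i) * real (d choose i)"
proof -
  have "Suc i * (d choose Suc i) = (d - i) * (d choose i)"
    using binomial_absorption[of i d] binomial_absorb_comp[of d i] by simp
  then show ?thesis by (metis of_nat_mult)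
qed

lemma one_sided_expander_mono:
  "one_sided_expander Y m q a \<Longrightarrow> a \<le> b \<Longrightarrow> one_sided_expander Y m q b"
  unfolding one_sided_expander_def by (meson le_less_trans)

locale weighted_complex =
  fixes X :: "'a set set" and d :: nat and p :: "'a set \<Rightarrow> real"
  assumes uniform: "uniform_complex X d" and full_support: "full_support_dist X d p"
begin

lemma finite_complex: "finite X"
  and finite_face: "s \<in> X \<Longrightarrow> finite s"
  and face_subset_closed: "s \<in> X \<Longrightarrow> t \<subseteq> s \<Longrightarrow> t \<in> X"
  and card_face_le: "s \<in> X \<Longrightarrow> card s \<le> d"
  and face_extends: "s \<in> X \<Longrightarrow> \<exists>t\<in>X. s \<subseteq> t \<and> card t = d"
  using uniform unfolding uniform_complex_def by simp_all

lemma top_weight_pos: "s \<in> faces X d \<Longrightarrow> p s > 0"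
  and top_weight_sum: "sum p (faces X d) = 1"
  using full_support unfolding full_support_dist_def by auto

lemma finite_faces: "finite (faces X i)"
  unfolding faces_def using finite_complex by simp

lemma mem_faces: "s \<in> faces X i \<longleftrightarrow> s \<in> X \<and> card s = i"
  unfolding faces_def by simp

lemma faces_in_complex: "s \<in> faces X i \<Longrightarrow> s \<in> X"
  and faces_card: "s \<in> faces X i \<Longrightarrow> card s = i"
  and faces_finite: "s \<in> faces X i \<Longrightarrow> finite s"
  by (simp_all add: mem_faces finite_face)

definition mass :: "'a set \<Rightarrow> real" where
  "mass r = (\<Sum>\<sigma>\<in>faces X d. if r \<subseteq> \<sigma> then p \<sigma> else 0)"

lemma mass_eq_sum_containing: "mass r = (\<Sum>\<sigma>\<in>{\<sigma> \<in> faces X d. r \<subseteq> \<sigma>}. p \<sigma>)"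
  unfolding mass_def by (simp only: sum.inter_filter[OF finite_faces])

lemma face_dist_eq_mass: "face_dist X d p j t = mass t / real (d choose j)"
  unfolding face_dist_def mass_eq_sum_containing ..

lemma mass_nonneg: "mass r \<ge> 0"
  unfolding mass_def by (intro sum_nonneg) (auto intro: less_imp_le top_weight_pos)

lemma mass_pos: assumes "r \<in> X" shows "mass r > 0"
proof -
  obtain t where t: "t \<in> X" "r \<subseteq> t" "card t = d" using face_extends[OF assms] by blast
  then have tf: "t \<in> faces X d" by (simp add: mem_faces)
  have "(if r \<subseteq> t then p t else 0) \<le> mass r"
    unfolding mass_def using tf
    by (intro member_le_sum finite_faces) (auto intro: less_imp_le top_weight_pos)
  then show ?thesis using t(2) top_weight_pos[OF tf] by simp
qed

lemma mass_eq_0: assumes "r \<notin> X" shows "mass r = 0"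
proof -
  have "\<not> r \<subseteq> \<sigma>" if "\<sigma> \<in> faces X d" for \<sigma>
    using assms face_subset_closed that by (auto simp: mem_faces)
  then show ?thesis unfolding mass_def by simp
qed

lemma mass_nonzero_imp_face: "mass r \<noteq> 0 \<Longrightarrow> r \<in> X"
  using mass_eq_0 by blast

lemma mass_empty: "mass {} = 1"
  unfolding mass_def using top_weight_sum by simp

lemma faces_0: "faces X 0 = {{}}"
proof -
  have "faces X d \<noteq> {}" using top_weight_sum by auto
  then obtain t where "t \<in> faces X d" by blast
  then have "{} \<in> X" using face_subset_closed by (auto simp: mem_faces)
  then show ?thesis using finite_face by (auto simp: mem_faces)
qed

definition link_vertices :: "'a set \<Rightarrow> 'a set" where
  "link_vertices r = {a. a \<notin> r \<and> insert a r \<in> X}"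

lemma finite_link_vertices: "finite (link_vertices r)"
proof -
  have "link_vertices r \<subseteq> \<Union>X" unfolding link_vertices_def by auto
  moreover have "finite (\<Union>X)" using finite_complex finite_face by auto
  ultimately show ?thesis by (rule finite_subset)
qed

lemma link_vertex_mass_pos: "a \<in> link_vertices r \<Longrightarrow> mass (insert a r) > 0"
  unfolding link_vertices_def by (intro mass_pos) simp

lemma link_vertices_insert_subset:
  "a \<in> link_vertices r \<Longrightarrow> link_vertices (insert a r) \<subseteq> link_vertices r - {a}"
  using face_subset_closed unfolding link_vertices_def
  by (auto simp: insert_commute) (metis insert_commute subset_insertI)

text \<open>Each top face containing \<open>r\<close> is counted once for each of its \<open>d - card r\<close> vertices
  outside \<open>r\<close>.\<close>
lemma sum_link_vertices_mass:
  assumes "r \<in> X"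
  shows "(\<Sum>a\<in>link_vertices r. mass (insert a r)) = real (d - card r) * mass r"
proof -
  have "(\<Sum>a\<in>link_vertices r. mass (insert a r))
      = (\<Sum>\<sigma>\<in>faces X d. \<Sum>a\<in>link_vertices r. if insert a r \<subseteq> \<sigma> then p \<sigma> else 0)"
    unfolding mass_def by (rule sum.swap)
  also have "\<dots> = (\<Sum>\<sigma>\<in>faces X d. real (d - card r) * (if r \<subseteq> \<sigma> then p \<sigma> else 0))"
  proof (intro sum.cong refl)
    fix \<sigma> assume \<sigma>: "\<sigma> \<in> faces X d"
    have "(\<Sum>a\<in>link_vertices r. if insert a r \<subseteq> \<sigma> then p \<sigma> else 0)
        = real (card {a\<in>link_vertices r. insert a r \<subseteq> \<sigma>}) * p \<sigma>"
      by (simp add: sum.inter_filter[OF finite_link_vertices, symmetric])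
    also have "\<dots> = real (d - card r) * (if r \<subseteq> \<sigma> then p \<sigma> else 0)"
    proof (cases "r \<subseteq> \<sigma>")
      case True
      have "{a\<in>link_vertices r. insert a r \<subseteq> \<sigma>} = \<sigma> - r"
        using True \<sigma> face_subset_closed unfolding link_vertices_def by (auto simp: mem_faces)
      moreover have "card (\<sigma> - r) = d - card r"
        using True \<sigma> finite_face by (simp add: card_Diff_subset finite_subset mem_faces)
      ultimately show ?thesis using True by simp
    qed auto
    finally show "(\<Sum>a\<in>link_vertices r. if insert a r \<subseteq> \<sigma> then p \<sigma> else 0)
      = real (d - card r) * (if r \<subseteq> \<sigma> then p \<sigma> else 0)" .
  qed
  also have "\<dots> = real (d - card r) * mass r" unfolding mass_def by (simp add: sum_distrib_left)
  finally show ?thesis .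
qed

lemma sum_faces_Suc_remove_vertex:
  "(\<Sum>s\<in>faces X (Suc i). \<Sum>a\<in>s. \<phi> (s - {a}) a) = (\<Sum>r\<in>faces X i. \<Sum>a\<in>link_vertices r. \<phi> r a)"
proof -
  let ?S = "SIGMA s:faces X (Suc i). s"
  let ?T = "SIGMA r:faces X i. link_vertices r"
  have to_T: "s - {a} \<in> faces X i \<and> a \<in> link_vertices (s - {a})"
    if s: "s \<in> faces X (Suc i)" and a: "a \<in> s" for s a
  proof -
    have "s - {a} \<in> faces X i"
      using face_subset_closed faces_finite[OF s] s a by (auto simp: mem_faces)
    moreover have "a \<in> link_vertices (s - {a})"
      using s a unfolding link_vertices_def by (auto simp: mem_faces insert_absorb)
    ultimately show ?thesis by simp
  qed
  have to_S: "insert a r \<in> faces X (Suc i)" if r: "r \<in> faces X i" and a: "a \<in> link_vertices r" for r a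
    using faces_finite[OF r] r a unfolding link_vertices_def by (auto simp: mem_faces)
  have bij: "bij_betw (\<lambda>(s, a). (s - {a}, a)) ?S ?T"
    by (rule bij_betwI[where g = "\<lambda>(r, a). (insert a r, a)"])
      (auto simp: to_T to_S insert_absorb link_vertices_def faces_in_complex)
  have "(\<Sum>s\<in>faces X (Suc i). \<Sum>a\<in>s. \<phi> (s - {a}) a) = (\<Sum>(s, a)\<in>?S. \<phi> (s - {a}) a)"
    by (rule sum.Sigma) (auto simp: finite_faces faces_finite)
  also have "\<dots> = (\<Sum>(r, a)\<in>?T. \<phi> r a)"
    using sum.reindex_bij_betw[OF bij, of "\<lambda>(r, a). \<phi> r a"] by (simp add: split_def)
  also have "\<dots> = (\<Sum>r\<in>faces X i. \<Sum>a\<in>link_vertices r. \<phi> r a)"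
    by (rule sum.Sigma[symmetric]) (auto simp: finite_faces finite_link_vertices)
  finally show ?thesis .
qed

lemma sum_faces_Suc_eq_sum_link:
  "(\<Sum>r\<in>faces X i. \<Sum>a\<in>link_vertices r. F (insert a r)) = real (Suc i) * (\<Sum>q\<in>faces X (Suc i). F q)"
proof -
  have "(\<Sum>r\<in>faces X i. \<Sum>a\<in>link_vertices r. F (insert a r))
      = (\<Sum>q\<in>faces X (Suc i). \<Sum>a\<in>q. F (insert a (q - {a})))"
    by (rule sum_faces_Suc_remove_vertex[symmetric])
  also have "\<dots> = (\<Sum>q\<in>faces X (Suc i). real (Suc i) * F q)"
    by (intro sum.cong refl) (simp add: insert_absorb faces_card)
  finally show ?thesis by (simp add: sum_distrib_left)
qed

text \<open>\<open>expect i\<close> is the expectation over \<open>\<pi>\<^sub>i\<close>; \<open>down i\<close> and \<open>up i\<close> are the operators of the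
  down-up walk between levels \<open>i + 1\<close> and \<open>i\<close>: \<open>down i F r\<close> averages \<open>F\<close> over the faces
  \<open>r \<union> {a}\<close> of the link of \<open>r\<close>, and \<open>up i H s\<close> averages \<open>H\<close> over the facets of \<open>s\<close>.\<close>
definition expect :: "nat \<Rightarrow> ('a set \<Rightarrow> real) \<Rightarrow> real" where
  "expect i F = (\<Sum>s\<in>faces X i. mass s * F s) / real (d choose i)"

definition down :: "nat \<Rightarrow> ('a set \<Rightarrow> real) \<Rightarrow> 'a set \<Rightarrow> real" where
  "down i F r = (\<Sum>a\<in>link_vertices r. mass (insert a r) * F (insert a r)) / (real (d - i) * mass r)"

definition up :: "nat \<Rightarrow> ('a set \<Rightarrow> real) \<Rightarrow> 'a set \<Rightarrow> real" where
  "up i H s = (\<Sum>a\<in>s. H (s - {a})) / real (Suc i)"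

lemma expect_eq_sum_face_dist: "expect i F = (\<Sum>s\<in>faces X i. face_dist X d p i s * F s)"
  unfolding expect_def face_dist_eq_mass by (simp add: sum_divide_distrib)

lemma expect_cong: "(\<And>s. s \<in> faces X i \<Longrightarrow> F s = G s) \<Longrightarrow> expect i F = expect i G"
  unfolding expect_def by simp

lemma expect_add: "expect i (\<lambda>s. F s + G s) = expect i F + expect i G"
  unfolding expect_def by (simp add: algebra_simps sum.distrib add_divide_distrib)

lemma expect_diff: "expect i (\<lambda>s. F s - G s) = expect i F - expect i G"
  unfolding expect_def by (simp add: algebra_simps sum_subtractf diff_divide_distrib)

lemma expect_cmult: "expect i (\<lambda>s. c * F s) = c * expect i F"
  unfolding expect_def by (simp add: sum_distrib_left mult.left_commute)

lemma expect_mono: "(\<And>s. s \<in> faces X i \<Longrightarrow> F s \<le> G s) \<Longrightarrow> expect i F \<le> expect i G"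
  unfolding expect_def
  by (intro divide_right_mono sum_mono mult_left_mono) (auto simp: mass_nonneg)

lemma expect_nonneg: "(\<And>s. s \<in> faces X i \<Longrightarrow> 0 \<le> F s) \<Longrightarrow> 0 \<le> expect i F"
  unfolding expect_def
  by (intro divide_nonneg_nonneg sum_nonneg mult_nonneg_nonneg) (auto simp: mass_nonneg)

lemma expect_mult_square_le:
  "(expect i (\<lambda>s. F s * G s))^2 \<le> expect i (\<lambda>s. (F s)^2) * expect i (\<lambda>s. (G s)^2)"
proof -
  have "(\<Sum>s\<in>faces X i. mass s * (F s * G s))^2
      = (\<Sum>s\<in>faces X i. (sqrt (mass s) * F s) * (sqrt (mass s) * G s))^2"
    using mass_nonneg by (simp add: algebra_simps real_sqrt_mult[symmetric])
  also have "\<dots> \<le> (\<Sum>s\<in>faces X i. (sqrt (mass s) * F s)^2) * (\<Sum>s\<in>faces X i. (sqrt (mass s) * G s)^2)"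
    by (rule Cauchy_Schwarz_ineq_sum)
  also have "\<dots> = (\<Sum>s\<in>faces X i. mass s * (F s)^2) * (\<Sum>s\<in>faces X i. mass s * (G s)^2)"
    using mass_nonneg by (simp add: power_mult_distrib)
  finally show ?thesis
    unfolding expect_def by (simp add: power_divide power2_eq_square divide_right_mono)
qed

lemma sum_link_eq_down:
  assumes "r \<in> faces X i" "i < d"
  shows "(\<Sum>a\<in>link_vertices r. mass (insert a r) * F (insert a r)) = real (d - i) * mass r * down i F r"
  using mass_pos[OF faces_in_complex[OF assms(1)]] assms(2) unfolding down_def by simp

lemma down_const: assumes "r \<in> faces X i" "i < d" shows "down i (\<lambda>_. c) r = c"
  using sum_link_vertices_mass[OF faces_in_complex[OF assms(1)]] mass_pos[OF faces_in_complex[OF assms(1)]]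
    assms(2) faces_card[OF assms(1)]
  unfolding down_def by (simp add: sum_distrib_right[symmetric])

lemma down_diff_const:
  assumes "r \<in> faces X i" "i < d"
  shows "down i (\<lambda>s. F s - c) r = down i F r - c"
proof -
  have "down i (\<lambda>s. F s - c) r = down i F r - down i (\<lambda>_. c) r"
    unfolding down_def by (simp add: algebra_simps sum_subtractf diff_divide_distrib)
  then show ?thesis using down_const[OF assms] by simp
qed

lemma expect_mult_up:
  assumes "i < d"
  shows "expect (Suc i) (\<lambda>s. F s * up i H s) = expect i (\<lambda>r. down i F r * H r)"
proof -
  have "real (Suc i) * (\<Sum>s\<in>faces X (Suc i). mass s * (F s * up i H s))
      = (\<Sum>s\<in>faces X (Suc i). \<Sum>a\<in>s. (\<lambda>r a. mass (insert a r) * F (insert a r) * H r) (s - {a}) a)"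
  proof -
    have "real (Suc i) * (mass s * (F s * up i H s)) = mass s * F s * (\<Sum>a\<in>s. H (s - {a}))" for s
      unfolding up_def by (simp del: of_nat_Suc)
    then show ?thesis by (simp add: sum_distrib_left insert_absorb mult.assoc)
  qed
  also have "\<dots> = (\<Sum>r\<in>faces X i. \<Sum>a\<in>link_vertices r. mass (insert a r) * F (insert a r) * H r)"
    by (rule sum_faces_Suc_remove_vertex)
  also have "\<dots> = real (d - i) * (\<Sum>r\<in>faces X i. mass r * (down i F r * H r))"
  proof -
    have "(\<Sum>a\<in>link_vertices r. mass (insert a r) * F (insert a r) * H r)
        = real (d - i) * (mass r * (down i F r * H r))" if "r \<in> faces X i" for r
      using sum_link_eq_down[OF that assms, of F] by (simp add: sum_distrib_right[symmetric])
    then show ?thesis by (simp add: sum_distrib_left)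
  qed
  finally have eq: "real (Suc i) * (\<Sum>s\<in>faces X (Suc i). mass s * (F s * up i H s))
      = real (d - i) * (\<Sum>r\<in>faces X i. mass r * (down i F r * H r))" .
  have "expect (Suc i) (\<lambda>s. F s * up i H s)
      = real (Suc i) * (\<Sum>s\<in>faces X (Suc i). mass s * (F s * up i H s))
        / (real (Suc i) * real (d choose Suc i))"
    unfolding expect_def by simp
  also have "\<dots> = real (d - i) * (\<Sum>r\<in>faces X i. mass r * (down i F r * H r))
        / (real (d - i) * real (d choose i))"
    unfolding eq Suc_mult_choose_Suc ..
  also have "\<dots> = expect i (\<lambda>r. down i F r * H r)"
    unfolding expect_def using assms by simp
  finally show ?thesis .
qed

lemma expect_Suc_eq_expect_down: assumes "i < d" shows "expect (Suc i) F = expect i (down i F)"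
proof -
  have "up i (\<lambda>_. 1) s = 1" if "s \<in> faces X (Suc i)" for s
    using that unfolding up_def by (simp add: faces_card)
  then have "expect (Suc i) F = expect (Suc i) (\<lambda>s. F s * up i (\<lambda>_. 1) s)"
    by (intro expect_cong) simp
  also have "\<dots> = expect i (down i F)" using expect_mult_up[OF assms] by simp
  finally show ?thesis .
qed

lemma expect_up: assumes "i < d" shows "expect (Suc i) (up i H) = expect i H"
proof -
  have "expect (Suc i) (up i H) = expect (Suc i) (\<lambda>s. 1 * up i H s)" by simp
  also have "\<dots> = expect i (\<lambda>r. down i (\<lambda>_. 1) r * H r)" by (rule expect_mult_up[OF assms])
  also have "\<dots> = expect i H" by (rule expect_cong) (simp add: down_const[OF _ assms])
  finally show ?thesis .
qed

lemma expect_0: "expect 0 G = G {}"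
  unfolding expect_def faces_0 using mass_empty by simp

lemma expect_const: assumes "i \<le> d" shows "expect i (\<lambda>_. c) = c"
  using assms
proof (induction i)
  case 0
  then show ?case by (simp add: expect_0)
next
  case (Suc i)
  then have "expect (Suc i) (\<lambda>_. c) = expect i (down i (\<lambda>_. c))"
    by (intro expect_Suc_eq_expect_down) simp
  also have "\<dots> = expect i (\<lambda>_. c)" using Suc.prems by (intro expect_cong down_const) auto
  finally show ?case using Suc by simp
qed

lemma expect_square_diff_const:
  assumes "i \<le> d"
  shows "expect i (\<lambda>s. (H s - c)^2) = expect i (\<lambda>s. (H s)^2) - 2 * c * expect i H + c^2"
proof -
  have "expect i (\<lambda>s. (H s - c)^2) = expect i (\<lambda>s. ((H s)^2 + c^2) - 2 * c * H s)"
    by (rule expect_cong) (simp add: power2_eq_square algebra_simps)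
  also have "\<dots> = expect i (\<lambda>s. (H s)^2) + c^2 - 2 * c * expect i H"
    unfolding expect_diff expect_add expect_cmult expect_const[OF assms] ..
  finally show ?thesis by simp
qed

section \<open>Garland's method\<close>

lemma graph_vertices_link: "graph_vertices (link_cx X r) = link_vertices r"
proof (intro set_eqI iffI)
  fix v assume "v \<in> graph_vertices (link_cx X r)"
  then obtain t where t: "{v} = t - r" "t \<in> X" "r \<subseteq> t"
    unfolding graph_vertices_def link_cx_def by blast
  then have "t = insert v r" by blast
  then show "v \<in> link_vertices r" using t unfolding link_vertices_def by blast
next
  fix v assume "v \<in> link_vertices r"
  then have "{v} = insert v r - r" "insert v r \<in> X" unfolding link_vertices_def by auto
  then show "v \<in> graph_vertices (link_cx X r)"
    unfolding graph_vertices_def link_cx_def by blast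
qed

lemma sum_link_top_faces:
  assumes r: "r \<in> faces X i" and u: "u \<in> link_vertices r" and v: "v \<in> link_vertices r"
  shows "(\<Sum>t\<in>{t \<in> faces (link_cx X r) (d - i). {u, v} \<subseteq> t}. p (r \<union> t)) = mass (insert u (insert v r))"
proof -
  have ri: "card r = i" "finite r" "r \<in> X" using r by (auto simp: mem_faces finite_face)
  have "i \<le> d" using card_face_le[OF ri(3)] ri(1) by simp
  let ?A = "{\<sigma> \<in> faces X d. insert u (insert v r) \<subseteq> \<sigma>}"
  let ?B = "{t \<in> faces (link_cx X r) (d - i). {u, v} \<subseteq> t}"
  have "u \<notin> r" "v \<notin> r" using u v unfolding link_vertices_def by auto
  have "bij_betw (\<lambda>\<sigma>. \<sigma> - r) ?A ?B"
  proof (rule bij_betw_imageI)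
    show "inj_on (\<lambda>\<sigma>. \<sigma> - r) ?A" by (rule inj_onI) blast
    show "(\<lambda>\<sigma>. \<sigma> - r) ` ?A = ?B"
    proof (intro equalityI subsetI)
      fix t assume "t \<in> (\<lambda>\<sigma>. \<sigma> - r) ` ?A"
      then obtain \<sigma> where \<sigma>: "\<sigma> \<in> faces X d" "insert u (insert v r) \<subseteq> \<sigma>" and t: "t = \<sigma> - r" by blast
      have "finite \<sigma>" "\<sigma> \<in> X" "card \<sigma> = d" using \<sigma> by (auto simp: mem_faces finite_face)
      then have "\<sigma> - r \<in> link_cx X r" "card (\<sigma> - r) = d - i"
        unfolding link_cx_def using \<sigma> ri by (auto simp: card_Diff_subset)
      then show "t \<in> ?B" using t \<sigma> \<open>u \<notin> r\<close> \<open>v \<notin> r\<close> by (auto simp: faces_def)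
    next
      fix t assume "t \<in> ?B"
      then obtain \<sigma> where \<sigma>: "t = \<sigma> - r" "\<sigma> \<in> X" "r \<subseteq> \<sigma>" and "card t = d - i" "{u, v} \<subseteq> t"
        unfolding link_cx_def by (auto simp: faces_def)
      moreover have "finite \<sigma>" using \<sigma> finite_face by simp
      ultimately have "card \<sigma> = d"
        using ri \<open>i \<le> d\<close> card_Diff_subset[of r \<sigma>] card_mono[of \<sigma> r] by simp
      then show "t \<in> (\<lambda>\<sigma>. \<sigma> - r) ` ?A" using \<sigma> \<open>{u, v} \<subseteq> t\<close> by (auto simp: mem_faces)
    qed
  qed
  then have "(\<Sum>t\<in>?B. p (r \<union> t)) = (\<Sum>\<sigma>\<in>?A. p (r \<union> (\<sigma> - r)))"
    by (rule sum.reindex_bij_betw[symmetric])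
  also have "\<dots> = (\<Sum>\<sigma>\<in>?A. p \<sigma>)"
    by (intro sum.cong refl) (simp add: Un_absorb1 insert_subset)
  finally show ?thesis by (simp add: mass_eq_sum_containing)
qed

definition link_weight :: "'a set \<Rightarrow> 'a \<Rightarrow> 'a \<Rightarrow> real" where
  "link_weight r a b = (if a \<noteq> b then mass (insert a (insert b r)) else 0)"

lemma link_weight_sym: "link_weight r a b = link_weight r b a"
  unfolding link_weight_def by (simp add: insert_commute)

lemma sum_link_weight:
  assumes r: "r \<in> faces X i" and a: "a \<in> link_vertices r"
  shows "(\<Sum>b\<in>link_vertices r. link_weight r a b) = real (d - Suc i) * mass (insert a r)"
proof -
  have "(\<Sum>b\<in>link_vertices r. link_weight r a b) = (\<Sum>b\<in>link_vertices r - {a}. link_weight r a b)"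
    using finite_link_vertices a by (simp add: sum.remove link_weight_def)
  also have "\<dots> = (\<Sum>b\<in>link_vertices r - {a}. mass (insert b (insert a r)))"
    unfolding link_weight_def by (intro sum.cong refl) (auto simp: insert_commute)
  also have "\<dots> = (\<Sum>b\<in>link_vertices (insert a r). mass (insert b (insert a r)))"
  proof (rule sum.mono_neutral_right)
    show "\<forall>b\<in>link_vertices r - {a} - link_vertices (insert a r). mass (insert b (insert a r)) = 0"
      using a unfolding link_vertices_def by (auto dest: mass_nonzero_imp_face)
  qed (use finite_link_vertices link_vertices_insert_subset[OF a] in auto)
  also have "\<dots> = real (d - card (insert a r)) * mass (insert a r)"
    using a by (intro sum_link_vertices_mass) (simp add: link_vertices_def)
  also have "card (insert a r) = Suc i"
    using a r unfolding link_vertices_def by (auto simp: mem_faces finite_face)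
  finally show ?thesis .
qed

lemma edge_weight_link:
  assumes r: "r \<in> faces X i" and u: "u \<in> link_vertices r" and v: "v \<in> link_vertices r"
  shows "edge_weight (link_cx X r) (d - i) (link_dist X d p r) u v
    = link_weight r u v / (mass r * real ((d - i) choose 2))"
proof (cases "u \<noteq> v \<and> {u, v} \<in> link_cx X r")
  case True
  have "face_dist (link_cx X r) (d - i) (link_dist X d p r) 2 {u, v}
      = (\<Sum>t\<in>{t \<in> faces (link_cx X r) (d - i). {u, v} \<subseteq> t}. p (r \<union> t) / mass r)
        / real ((d - i) choose 2)"
    unfolding face_dist_def link_dist_def mass_eq_sum_containing by simp
  also have "\<dots> = mass (insert u (insert v r)) / (mass r * real ((d - i) choose 2))"
    unfolding sum_divide_distrib[symmetric] sum_link_top_faces[OF r u v] by simp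
  finally show ?thesis unfolding edge_weight_def link_weight_def using True by simp
next
  case False
  have "mass (insert u (insert v r)) = 0" if "u \<noteq> v"
  proof (rule ccontr)
    assume "mass (insert u (insert v r)) \<noteq> 0"
    then have "insert u (insert v r) \<in> X" by (rule mass_nonzero_imp_face)
    moreover have "{u, v} = insert u (insert v r) - r" using u v unfolding link_vertices_def by auto
    ultimately show False using False that unfolding link_cx_def by blast
  qed
  then show ?thesis unfolding edge_weight_def link_weight_def using False by auto
qed

lemma norm_adj_link:
  assumes r: "r \<in> faces X i" and d: "Suc (Suc i) \<le> d" and a: "a \<in> link_vertices r"
  shows "norm_adj (link_cx X r) (d - i) (link_dist X d p r) f a
     = (\<Sum>b\<in>link_vertices r. link_weight r a b * f b) / (real (d - Suc i) * mass (insert a r))"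
proof -
  define C where "C = mass r * real ((d - i) choose 2)"
  have "C > 0" unfolding C_def using mass_pos[OF faces_in_complex[OF r]] d by simp
  have "norm_adj (link_cx X r) (d - i) (link_dist X d p r) f a
      = (\<Sum>b\<in>link_vertices r. link_weight r a b / C * f b) / (\<Sum>b\<in>link_vertices r. link_weight r a b / C)"
    unfolding norm_adj_def graph_vertices_link C_def using edge_weight_link[OF r a] by simp
  also have "\<dots> = (\<Sum>b\<in>link_vertices r. link_weight r a b * f b) / (\<Sum>b\<in>link_vertices r. link_weight r a b)"
    using \<open>C > 0\<close> by (simp add: sum_divide_distrib[symmetric])
  finally show ?thesis by (simp add: sum_link_weight[OF r a])
qed

lemma link_symmetric_form:
  "symmetric_form (link_vertices r) (\<lambda>a. mass (insert a r)) (link_weight r)"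
  by unfold_locales (simp_all add: finite_link_vertices link_vertex_mass_pos link_weight_sym)

lemma is_eigvec_link:
  assumes r: "r \<in> faces X i" and d: "Suc (Suc i) \<le> d"
    and nz: "\<exists>a\<in>link_vertices r. x a \<noteq> 0"
    and eig: "\<And>a. a \<in> link_vertices r \<Longrightarrow>
      (\<Sum>b\<in>link_vertices r. link_weight r a b * x b) = \<mu> * mass (insert a r) * x a"
  shows "is_eigvec (link_cx X r) (d - i) (link_dist X d p r) x (\<mu> / real (d - Suc i))"
  unfolding is_eigvec_def graph_vertices_link
proof (intro conjI ballI nz)
  fix a assume a: "a \<in> link_vertices r"
  show "norm_adj (link_cx X r) (d - i) (link_dist X d p r) x a = \<mu> / real (d - Suc i) * x a"
    unfolding norm_adj_link[OF r d a] eig[OF a] using link_vertex_mass_pos[OF a] by simp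
qed

text \<open>Garland's condition at \<open>r\<close>: the weighted adjacency form of the link of \<open>r\<close>, whose
  degrees are \<open>d - card r - 1\<close> times the vertex weights, is at most \<open>\<gamma>\<close> times the norm on
  the complement of the constants.\<close>
definition link_quadratic_bound :: "real \<Rightarrow> 'a set \<Rightarrow> bool" where
  "link_quadratic_bound \<gamma> r \<longleftrightarrow> (\<forall>h.
     (\<Sum>a\<in>link_vertices r. \<Sum>b\<in>link_vertices r. link_weight r a b * h a * h b)
     \<le> real (d - Suc (card r)) * (\<gamma> * (\<Sum>a\<in>link_vertices r. mass (insert a r) * (h a)^2)
        + (1 - \<gamma>) * (\<Sum>a\<in>link_vertices r. mass (insert a r) * h a)^2 / (real (d - card r) * mass r)))"

lemma link_form_le_of_total_zero:
  assumes r: "r \<in> faces X i" and d: "Suc (Suc i) \<le> d"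
    and expander: "one_sided_expander (link_cx X r) (d - i) (link_dist X d p r) \<gamma>" and "\<gamma> < 1"
    and total: "(\<Sum>a\<in>link_vertices r. mass (insert a r) * h a) = 0"
  shows "(\<Sum>a\<in>link_vertices r. \<Sum>b\<in>link_vertices r. link_weight r a b * h a * h b)
    \<le> real (d - Suc i) * \<gamma> * (\<Sum>a\<in>link_vertices r. mass (insert a r) * (h a)^2)"
proof (rule ccontr)
  interpret L: symmetric_form "link_vertices r" "\<lambda>a. mass (insert a r)" "link_weight r"
    by (rule link_symmetric_form)
  define \<kappa> where "\<kappa> = real (d - Suc i)"
  have "\<kappa> > 0" unfolding \<kappa>_def using d by simp
  assume "\<not> ?thesis"
  then have "L.qform h > \<kappa> * \<gamma> * L.sqnorm h"
    unfolding L.qform_def L.sqnorm_def \<kappa>_def by simp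
  then obtain x \<mu> where x: "L.total x = 0" "\<exists>a\<in>link_vertices r. x a \<noteq> 0" and "\<mu> > \<kappa> * \<gamma>"
    and eig: "\<And>a. a \<in> link_vertices r \<Longrightarrow>
      (\<Sum>b\<in>link_vertices r. link_weight r a b * x b) = \<mu> * mass (insert a r) * x a"
    using L.eigenvector_above_rayleigh_quotient[OF sum_link_weight[OF r] total[folded L.total_def]]
    by blast
  have eig_x: "is_eigvec (link_cx X r) (d - i) (link_dist X d p r) x (\<mu> / \<kappa>)"
    unfolding \<kappa>_def by (rule is_eigvec_link[OF r d x(2) eig])
  have eig_1: "is_eigvec (link_cx X r) (d - i) (link_dist X d p r) (\<lambda>_. 1) 1"
    using is_eigvec_link[OF r d, of "\<lambda>_. 1" "real (d - Suc i)"] x(2) d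
    by (simp add: sum_link_weight[OF r]) blast
  have "lin_indep2_on (graph_vertices (link_cx X r)) x (\<lambda>_. 1)"
    unfolding lin_indep2_on_def graph_vertices_link
  proof (intro allI impI)
    fix \<alpha> \<beta> :: real assume combination: "\<forall>u\<in>link_vertices r. \<alpha> * x u + \<beta> * 1 = 0"
    have "(\<Sum>u\<in>link_vertices r. mass (insert u r)) > 0"
      using x(2) finite_link_vertices link_vertex_mass_pos by (intro sum_pos) auto
    moreover have "\<alpha> * L.total x + \<beta> * (\<Sum>u\<in>link_vertices r. mass (insert u r))
        = (\<Sum>u\<in>link_vertices r. mass (insert u r) * (\<alpha> * x u + \<beta> * 1))"
      unfolding L.total_def by (simp add: sum.distrib sum_distrib_left algebra_simps)
    then have "\<alpha> * L.total x + \<beta> * (\<Sum>u\<in>link_vertices r. mass (insert u r)) = 0"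
      using combination by simp
    ultimately have "\<beta> = 0" using x(1) by simp
    then show "\<alpha> = 0 \<and> \<beta> = 0" using combination x(2) by auto
  qed
  moreover have "\<mu> / \<kappa> > \<gamma>" using \<open>\<mu> > \<kappa> * \<gamma>\<close> \<open>\<kappa> > 0\<close> by (simp add: field_simps)
  ultimately show False
    using expander eig_x eig_1 \<open>\<gamma> < 1\<close> unfolding one_sided_expander_def by blast
qed

lemma one_sided_expander_imp_link_quadratic_bound:
  assumes r: "r \<in> faces X i" and d: "Suc (Suc i) \<le> d"
    and expander: "one_sided_expander (link_cx X r) (d - i) (link_dist X d p r) \<gamma>" and "\<gamma> < 1"
  shows "link_quadratic_bound \<gamma> r"
  unfolding link_quadratic_bound_def
proof
  interpret L: symmetric_form "link_vertices r" "\<lambda>a. mass (insert a r)" "link_weight r"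
    by (rule link_symmetric_form)
  fix h :: "'a \<Rightarrow> real"
  have T: "L.total (\<lambda>_. 1) = real (d - i) * mass r"
    using sum_link_vertices_mass[OF faces_in_complex[OF r]] faces_card[OF r] unfolding L.total_def by simp
  then have "link_vertices r \<noteq> {}"
    using mass_pos[OF faces_in_complex[OF r]] d unfolding L.total_def by auto
  have "L.qform h \<le> real (d - Suc i) * (\<gamma> * L.sqnorm h + (1 - \<gamma>) * (L.total h)^2 / L.total (\<lambda>_. 1))"
  proof (rule L.qform_le_with_mean[OF sum_link_weight[OF r] \<open>link_vertices r \<noteq> {}\<close>])
    show "L.qform y \<le> real (d - Suc i) * \<gamma> * L.sqnorm y" if "L.total y = 0" for y
      using link_form_le_of_total_zero[OF r d expander \<open>\<gamma> < 1\<close>] that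
      unfolding L.qform_def L.sqnorm_def L.total_def by blast
  qed
  then show "(\<Sum>a\<in>link_vertices r. \<Sum>b\<in>link_vertices r. link_weight r a b * h a * h b)
     \<le> real (d - Suc (card r)) * (\<gamma> * (\<Sum>a\<in>link_vertices r. mass (insert a r) * (h a)^2)
        + (1 - \<gamma>) * (\<Sum>a\<in>link_vertices r. mass (insert a r) * h a)^2 / (real (d - card r) * mass r))"
    unfolding T unfolding L.qform_def L.sqnorm_def L.total_def faces_card[OF r] .
qed

section \<open>Local-to-global contraction\<close>

lemma sum_faces_Suc_Suc_diag:
  "(\<Sum>s\<in>faces X (Suc (Suc i)). \<Sum>a\<in>s. mass s * (H (s - {a}))^2)
    = real (d - Suc i) * (\<Sum>q\<in>faces X (Suc i). mass q * (H q)^2)"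
proof -
  have "(\<Sum>s\<in>faces X (Suc (Suc i)). \<Sum>a\<in>s. mass s * (H (s - {a}))^2)
      = (\<Sum>s\<in>faces X (Suc (Suc i)). \<Sum>a\<in>s. (\<lambda>q a. mass (insert a q) * (H q)^2) (s - {a}) a)"
    by (intro sum.cong refl) (simp add: insert_absorb)
  also have "\<dots> = (\<Sum>q\<in>faces X (Suc i). \<Sum>a\<in>link_vertices q. mass (insert a q) * (H q)^2)"
    by (rule sum_faces_Suc_remove_vertex)
  also have "\<dots> = real (d - Suc i) * (\<Sum>q\<in>faces X (Suc i). mass q * (H q)^2)"
    by (simp add: sum_distrib_left sum_distrib_right[symmetric] sum_link_vertices_mass
        faces_in_complex faces_card mult.assoc)
  finally show ?thesis .
qed

lemma sum_faces_Suc_Suc_cross: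
  "(\<Sum>s\<in>faces X (Suc (Suc i)). \<Sum>a\<in>s. \<Sum>b\<in>s - {a}. mass s * H (s - {a}) * H (s - {b}))
    = (\<Sum>r\<in>faces X i. \<Sum>b\<in>link_vertices r. \<Sum>a\<in>link_vertices r.
         link_weight r b a * H (insert b r) * H (insert a r))"
proof -
  have "(\<Sum>s\<in>faces X (Suc (Suc i)). \<Sum>a\<in>s. \<Sum>b\<in>s - {a}. mass s * H (s - {a}) * H (s - {b}))
      = (\<Sum>s\<in>faces X (Suc (Suc i)). \<Sum>a\<in>s.
          (\<lambda>q a. \<Sum>b\<in>q. mass (insert a q) * H q * H (insert a q - {b})) (s - {a}) a)"
    by (intro sum.cong refl) (simp add: insert_absorb)
  also have "\<dots> = (\<Sum>q\<in>faces X (Suc i). \<Sum>a\<in>link_vertices q. \<Sum>b\<in>q.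
      mass (insert a q) * H q * H (insert a q - {b}))"
    by (rule sum_faces_Suc_remove_vertex)
  also have "\<dots> = (\<Sum>q\<in>faces X (Suc i). \<Sum>b\<in>q. \<Sum>a\<in>link_vertices q.
      mass (insert a q) * H q * H (insert a q - {b}))"
    by (intro sum.cong refl sum.swap)
  also have "\<dots> = (\<Sum>q\<in>faces X (Suc i). \<Sum>b\<in>q. (\<lambda>r b. \<Sum>a\<in>link_vertices (insert b r).
      mass (insert a (insert b r)) * H (insert b r) * H (insert a r)) (q - {b}) b)"
  proof (rule sum.cong[OF refl], rule sum.cong[OF refl])
    fix q :: "'a set" and b assume "b \<in> q"
    have "insert a q - {b} = insert a (q - {b})" if "a \<in> link_vertices q" for a
      using that \<open>b \<in> q\<close> unfolding link_vertices_def by auto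
    then show "(\<Sum>a\<in>link_vertices q. mass (insert a q) * H q * H (insert a q - {b}))
      = (\<lambda>r b. \<Sum>a\<in>link_vertices (insert b r). mass (insert a (insert b r))
          * H (insert b r) * H (insert a r)) (q - {b}) b"
      using \<open>b \<in> q\<close> by (simp add: insert_absorb)
  qed
  also have "\<dots> = (\<Sum>r\<in>faces X i. \<Sum>b\<in>link_vertices r. \<Sum>a\<in>link_vertices (insert b r).
      mass (insert a (insert b r)) * H (insert b r) * H (insert a r))"
    by (rule sum_faces_Suc_remove_vertex)
  also have "\<dots> = (\<Sum>r\<in>faces X i. \<Sum>b\<in>link_vertices r. \<Sum>a\<in>link_vertices r.
      link_weight r b a * H (insert b r) * H (insert a r))"
  proof (rule sum.cong[OF refl], rule sum.cong[OF refl])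
    fix r b assume b: "b \<in> link_vertices r"
    show "(\<Sum>a\<in>link_vertices (insert b r). mass (insert a (insert b r)) * H (insert b r) * H (insert a r))
      = (\<Sum>a\<in>link_vertices r. link_weight r b a * H (insert b r) * H (insert a r))"
    proof (rule sum.mono_neutral_cong_left)
      show "\<forall>a\<in>link_vertices r - link_vertices (insert b r).
          link_weight r b a * H (insert b r) * H (insert a r) = 0"
        using b unfolding link_vertices_def link_weight_def
        by (auto dest: mass_nonzero_imp_face simp: insert_commute)
      show "\<And>a. a \<in> link_vertices (insert b r) \<Longrightarrow>
          mass (insert a (insert b r)) * H (insert b r) * H (insert a r)
          = link_weight r b a * H (insert b r) * H (insert a r)"
        unfolding link_vertices_def link_weight_def by (auto simp: insert_commute)
    qed (use finite_link_vertices link_vertices_insert_subset[OF b] in auto)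
  qed
  finally show ?thesis .
qed

lemma sum_mass_up_square:
  "(\<Sum>s\<in>faces X (Suc (Suc i)). mass s * (\<Sum>a\<in>s. H (s - {a}))^2)
    = real (d - Suc i) * (\<Sum>q\<in>faces X (Suc i). mass q * (H q)^2)
      + (\<Sum>r\<in>faces X i. \<Sum>b\<in>link_vertices r. \<Sum>a\<in>link_vertices r.
           link_weight r b a * H (insert b r) * H (insert a r))"
  unfolding sum_faces_Suc_Suc_diag[symmetric] sum_faces_Suc_Suc_cross[symmetric]
  by (simp add: square_sum_eq_diag_plus_cross faces_finite algebra_simps sum.distrib sum_distrib_left)

lemma sum_link_quadratic_bound:
  assumes d: "Suc i < d" and bound: "\<And>r. r \<in> faces X i \<Longrightarrow> link_quadratic_bound \<gamma> r"
  shows "(\<Sum>r\<in>faces X i. \<Sum>b\<in>link_vertices r. \<Sum>a\<in>link_vertices r.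
           link_weight r b a * H (insert b r) * H (insert a r))
    \<le> real (d - Suc i) * (\<gamma> * (real (Suc i) * (\<Sum>q\<in>faces X (Suc i). mass q * (H q)^2))
        + (1 - \<gamma>) * real (d - i) * (\<Sum>r\<in>faces X i. mass r * (down i H r)^2))"
proof -
  have local: "(\<Sum>b\<in>link_vertices r. \<Sum>a\<in>link_vertices r. link_weight r b a * H (insert b r) * H (insert a r))
      \<le> real (d - Suc i) * (\<gamma> * (\<Sum>a\<in>link_vertices r. mass (insert a r) * (H (insert a r))^2)
          + (1 - \<gamma>) * (real (d - i) * (mass r * (down i H r)^2)))"
    if r: "r \<in> faces X i" for r
  proof -
    have "mass r > 0" using mass_pos[OF faces_in_complex[OF r]] .
    have "(\<Sum>a\<in>link_vertices r. mass (insert a r) * H (insert a r)) = real (d - i) * mass r * down i H r"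
      using d by (intro sum_link_eq_down[OF r]) simp
    then have eq: "(\<Sum>a\<in>link_vertices r. mass (insert a r) * H (insert a r))^2 / (real (d - i) * mass r)
        = real (d - i) * (mass r * (down i H r)^2)"
      using d \<open>mass r > 0\<close> by (simp add: power2_eq_square)
    have "(\<Sum>b\<in>link_vertices r. \<Sum>a\<in>link_vertices r. link_weight r b a * H (insert b r) * H (insert a r))
      \<le> real (d - Suc i) * (\<gamma> * (\<Sum>a\<in>link_vertices r. mass (insert a r) * (H (insert a r))^2)
          + (1 - \<gamma>) * (\<Sum>a\<in>link_vertices r. mass (insert a r) * H (insert a r))^2 / (real (d - i) * mass r))"
      using bound[OF r] faces_card[OF r] unfolding link_quadratic_bound_def
      by (drule_tac spec[of _ "\<lambda>a. H (insert a r)"]) simp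
    then show ?thesis unfolding times_divide_eq_right[symmetric] eq .
  qed
  have "(\<Sum>r\<in>faces X i. \<Sum>b\<in>link_vertices r. \<Sum>a\<in>link_vertices r.
           link_weight r b a * H (insert b r) * H (insert a r))
      \<le> (\<Sum>r\<in>faces X i. real (d - Suc i) * (\<gamma> * (\<Sum>a\<in>link_vertices r. mass (insert a r) * (H (insert a r))^2)
          + (1 - \<gamma>) * (real (d - i) * (mass r * (down i H r)^2))))"
    by (rule sum_mono) (rule local)
  also have "\<dots> = real (d - Suc i) * (\<gamma> * (real (Suc i) * (\<Sum>q\<in>faces X (Suc i). mass q * (H q)^2))
        + (1 - \<gamma>) * real (d - i) * (\<Sum>r\<in>faces X i. mass r * (down i H r)^2))"
    unfolding sum_faces_Suc_eq_sum_link[symmetric, of _ "\<lambda>q. mass q * (H q)^2"]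
    by (simp add: sum.distrib sum_distrib_left distrib_left mult.assoc)
  finally show ?thesis .
qed

lemma expect_up_square_le:
  assumes d: "Suc (Suc i) \<le> d" and bound: "\<And>r. r \<in> faces X i \<Longrightarrow> link_quadratic_bound \<gamma> r"
  shows "expect (Suc (Suc i)) (\<lambda>s. (up (Suc i) H s)^2)
    \<le> expect (Suc i) (\<lambda>q. (H q)^2) / real (Suc (Suc i))
      + real (Suc i) / real (Suc (Suc i))
        * (\<gamma> * expect (Suc i) (\<lambda>q. (H q)^2) + (1 - \<gamma>) * expect i (\<lambda>r. (down i H r)^2))"
proof -
  define W1 where "W1 = (\<Sum>q\<in>faces X (Suc i). mass q * (H q)^2)"
  define W0 where "W0 = (\<Sum>r\<in>faces X i. mass r * (down i H r)^2)"
  define c0 c1 c2 where "c0 = real (d choose i)" and "c1 = real (d choose Suc i)"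
    and "c2 = real (d choose Suc (Suc i))"
  define n m1 m2 where "n = real (d - Suc i)" and "m1 = real (Suc i)" and "m2 = real (Suc (Suc i))"
  have pos: "c1 > 0" "n > 0" "m1 > 0" "m2 > 0" using d by (auto simp: c1_def n_def m1_def m2_def)
  have c2: "c2 = n * c1 / m2"
    using Suc_mult_choose_Suc[of "Suc i" d] pos unfolding c1_def c2_def n_def m2_def
    by (simp add: field_simps)
  have c0: "c0 = m1 * c1 / (n + 1)"
    using Suc_mult_choose_Suc[of i d] d unfolding c0_def c1_def n_def m1_def
    by (simp add: field_simps Suc_diff_Suc)
  have "expect (Suc (Suc i)) (\<lambda>s. (up (Suc i) H s)^2)
      = (\<Sum>s\<in>faces X (Suc (Suc i)). mass s * (\<Sum>a\<in>s. H (s - {a}))^2) / (m2^2 * c2)"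
    unfolding expect_def up_def c2_def m2_def
    by (simp add: power_divide sum_divide_distrib[symmetric] divide_divide_eq_left del: of_nat_Suc)
  also have "\<dots> \<le> (n * W1 + n * (\<gamma> * (m1 * W1) + (1 - \<gamma>) * (n + 1) * W0)) / (m2^2 * c2)"
    unfolding sum_mass_up_square
    using sum_link_quadratic_bound[of i \<gamma> H] d bound pos
    unfolding W1_def W0_def n_def m1_def c2
    by (intro divide_right_mono add_left_mono) (auto simp: Suc_diff_Suc)
  also have "\<dots> = W1 / c1 / m2 + m1 / m2 * (\<gamma> * (W1 / c1) + (1 - \<gamma>) * (W0 / c0))"
    unfolding c2 c0 using pos by (simp add: field_simps power2_eq_square)
  also have "\<dots> = expect (Suc i) (\<lambda>q. (H q)^2) / real (Suc (Suc i))
      + real (Suc i) / real (Suc (Suc i))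
        * (\<gamma> * expect (Suc i) (\<lambda>q. (H q)^2) + (1 - \<gamma>) * expect i (\<lambda>r. (down i H r)^2))"
    unfolding expect_def W1_def W0_def c0_def c1_def m1_def m2_def ..
  finally show ?thesis .
qed

text \<open>With \<open>H = down (i + 1) F\<close>, adjointness and Cauchy-Schwarz give
  \<open>E H\<^sup>2 = E (F \<cdot> up H) \<le> sqrt (E F\<^sup>2 \<cdot> E (up H)\<^sup>2)\<close>, and Garland's bound controls
  \<open>E (up H)\<^sup>2\<close> by \<open>E H\<^sup>2\<close> and the induction hypothesis.\<close>
lemma expect_down_square_step:
  assumes d: "Suc (Suc i) \<le> d" and bound: "\<And>r. r \<in> faces X i \<Longrightarrow> link_quadratic_bound \<gamma> r"
    and "0 \<le> \<gamma>" "\<gamma> \<le> 1" "0 \<le> \<beta>"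
    and IH: "expect i (\<lambda>r. (down i (down (Suc i) F) r)^2) \<le> \<beta> * expect (Suc i) (\<lambda>q. (down (Suc i) F q)^2)"
  shows "expect (Suc i) (\<lambda>q. (down (Suc i) F q)^2)
    \<le> (1 / real (Suc (Suc i)) + real (Suc i) / real (Suc (Suc i)) * (\<gamma> + (1 - \<gamma>) * \<beta>))
      * expect (Suc (Suc i)) (\<lambda>s. (F s)^2)"
proof -
  define H where "H = down (Suc i) F"
  define V where "V = expect (Suc i) (\<lambda>q. (H q)^2)"
  define EF where "EF = expect (Suc (Suc i)) (\<lambda>s. (F s)^2)"
  define a where "a = 1 / real (Suc (Suc i)) + real (Suc i) / real (Suc (Suc i)) * (\<gamma> + (1 - \<gamma>) * \<beta>)"
  have "V = expect (Suc (Suc i)) (\<lambda>s. F s * up (Suc i) H s)"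
    unfolding V_def H_def using expect_mult_up[of "Suc i" F] d by (simp add: power2_eq_square)
  then have "V^2 \<le> EF * expect (Suc (Suc i)) (\<lambda>s. (up (Suc i) H s)^2)"
    unfolding EF_def by (simp add: expect_mult_square_le)
  also have "expect (Suc (Suc i)) (\<lambda>s. (up (Suc i) H s)^2) \<le> a * V"
  proof -
    have "(1 - \<gamma>) * expect i (\<lambda>r. (down i H r)^2) \<le> (1 - \<gamma>) * (\<beta> * V)"
      using IH \<open>\<gamma> \<le> 1\<close> unfolding H_def V_def by (intro mult_left_mono) auto
    then have "expect (Suc (Suc i)) (\<lambda>s. (up (Suc i) H s)^2)
        \<le> V / real (Suc (Suc i)) + real (Suc i) / real (Suc (Suc i)) * (\<gamma> * V + (1 - \<gamma>) * (\<beta> * V))"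
      using expect_up_square_le[OF d bound, of H] unfolding V_def
      by (smt (verit) divide_nonneg_nonneg mult_left_mono of_nat_0_le_iff)
    also have "V / real (Suc (Suc i)) + real (Suc i) / real (Suc (Suc i)) * (\<gamma> * V + (1 - \<gamma>) * (\<beta> * V))
        = a * V"
      unfolding a_def by (simp add: algebra_simps add_divide_distrib diff_divide_distrib)
    finally show ?thesis .
  qed
  finally have "V^2 \<le> EF * (a * V)"
    using expect_nonneg[of "Suc (Suc i)" "\<lambda>s. (F s)^2"] unfolding EF_def
    by (simp add: mult_left_mono)
  moreover have "V \<ge> 0" "EF \<ge> 0" "a \<ge> 0"
    unfolding V_def EF_def a_def using \<open>0 \<le> \<gamma>\<close> \<open>\<gamma> \<le> 1\<close> \<open>0 \<le> \<beta>\<close>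
    by (auto intro!: expect_nonneg)
  ultimately have "V \<le> a * EF"
    by (cases "V = 0") (auto simp: power2_eq_square mult.commute mult.left_commute)
  then show ?thesis unfolding V_def EF_def a_def H_def .
qed

lemma expect_down_square_le:
  assumes "Suc i \<le> d" "0 \<le> \<gamma>" "\<gamma> \<le> 1"
    and "\<And>r. r \<in> X \<Longrightarrow> card r < i \<Longrightarrow> link_quadratic_bound \<gamma> r"
    and "expect (Suc i) F = 0"
  shows "expect i (\<lambda>r. (down i F r)^2) \<le> (1 - (1 - \<gamma>)^i / real (Suc i)) * expect (Suc i) (\<lambda>s. (F s)^2)"
  using assms
proof (induction i arbitrary: F)
  case 0
  then have "down 0 F {} = 0" using expect_Suc_eq_expect_down[of 0 F] by (simp add: expect_0)
  then show ?case by (simp add: expect_0)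
next
  case (Suc i)
  define \<beta> where "\<beta> = 1 - (1 - \<gamma>)^i / real (Suc i)"
  have "(1 - \<gamma>)^i \<le> 1" using Suc.prems(2,3) by (intro power_le_one) auto
  then have "\<beta> \<ge> 0" unfolding \<beta>_def by (simp add: field_simps)
  have "expect (Suc i) (down (Suc i) F) = 0"
    using expect_Suc_eq_expect_down[of "Suc i" F] Suc.prems by simp
  then have "expect i (\<lambda>r. (down i (down (Suc i) F) r)^2) \<le> \<beta> * expect (Suc i) (\<lambda>q. (down (Suc i) F q)^2)"
    unfolding \<beta>_def using Suc.prems by (intro Suc.IH) auto
  then have "expect (Suc i) (\<lambda>q. (down (Suc i) F q)^2)
      \<le> (1 / real (Suc (Suc i)) + real (Suc i) / real (Suc (Suc i)) * (\<gamma> + (1 - \<gamma>) * \<beta>))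
        * expect (Suc (Suc i)) (\<lambda>s. (F s)^2)"
    using Suc.prems \<open>\<beta> \<ge> 0\<close> by (intro expect_down_square_step) (auto simp: mem_faces)
  also have "1 / real (Suc (Suc i)) + real (Suc i) / real (Suc (Suc i)) * (\<gamma> + (1 - \<gamma>) * \<beta>)
      = 1 - (1 - \<gamma>)^Suc i / real (Suc (Suc i))"
  proof -
    have "real (Suc i) * (\<gamma> + (1 - \<gamma>) * \<beta>) = real (Suc i) - (1 - \<gamma>)^Suc i"
      unfolding \<beta>_def by (simp add: field_simps)
    then show ?thesis by (simp add: field_simps)
  qed
  finally show ?case .
qed

lemma variance_le_down_gap:
  assumes "Suc n \<le> d" "0 \<le> \<gamma>" "\<gamma> \<le> 1"
    and "\<And>r. r \<in> X \<Longrightarrow> card r < n \<Longrightarrow> link_quadratic_bound \<gamma> r"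
  shows "(1 - \<gamma>)^n / real (Suc n) * (expect (Suc n) (\<lambda>s. (F s)^2) - (expect (Suc n) F)^2)
     \<le> expect (Suc n) (\<lambda>s. (F s)^2) - expect n (\<lambda>r. (down n F r)^2)"
proof -
  define \<mu> where "\<mu> = expect (Suc n) F"
  have "n < d" using assms(1) by simp
  have "expect (Suc n) (\<lambda>s. F s - \<mu>) = 0"
    unfolding \<mu>_def expect_diff expect_const[OF assms(1)] by simp
  then have "expect n (\<lambda>r. (down n (\<lambda>s. F s - \<mu>) r)^2)
      \<le> (1 - (1 - \<gamma>)^n / real (Suc n)) * expect (Suc n) (\<lambda>s. (F s - \<mu>)^2)"
    using assms by (intro expect_down_square_le) auto
  moreover have "expect n (\<lambda>r. (down n (\<lambda>s. F s - \<mu>) r)^2) = expect n (\<lambda>r. (down n F r)^2) - \<mu>^2"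
  proof -
    have "expect n (\<lambda>r. (down n (\<lambda>s. F s - \<mu>) r)^2) = expect n (\<lambda>r. (down n F r - \<mu>)^2)"
      by (rule expect_cong) (simp add: down_diff_const[OF _ \<open>n < d\<close>])
    moreover have "expect n (down n F) = \<mu>"
      unfolding \<mu>_def using expect_Suc_eq_expect_down[OF \<open>n < d\<close>] by simp
    moreover have "expect n (\<lambda>r. (down n F r - \<mu>)^2)
        = expect n (\<lambda>r. (down n F r)^2) - 2 * \<mu> * expect n (down n F) + \<mu>^2"
      using \<open>n < d\<close> by (intro expect_square_diff_const) simp
    ultimately show ?thesis by (simp add: power2_eq_square)
  qed
  moreover have "expect (Suc n) (\<lambda>s. (F s - \<mu>)^2) = expect (Suc n) (\<lambda>s. (F s)^2) - \<mu>^2"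
    unfolding expect_square_diff_const[OF assms(1)] \<mu>_def by (simp add: power2_eq_square)
  ultimately show ?thesis unfolding \<mu>_def[symmetric] by (simp add: algebra_simps)
qed

section \<open>Exponential moments of lifts\<close>

lemma down_variance_le:
  assumes r: "r \<in> faces X n" and "n < d"
    and pairs: "\<And>a b. a \<in> link_vertices r \<Longrightarrow> b \<in> link_vertices r \<Longrightarrow>
      (h (insert a r) - h (insert b r))^2 \<le> K * (e (insert a r) + e (insert b r))"
  shows "down n (\<lambda>s. (h s)^2) r - (down n h r)^2 \<le> K * down n e r"
proof -
  define w where "w a = mass (insert a r) / (real (d - n) * mass r)" for a
  have down: "down n F r = (\<Sum>a\<in>link_vertices r. w a * F (insert a r))" for F
    unfolding down_def w_def by (simp add: sum_divide_distrib)
  have "(\<Sum>a\<in>link_vertices r. w a) = 1"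
    unfolding w_def sum_divide_distrib[symmetric]
    using sum_link_vertices_mass[OF faces_in_complex[OF r]] faces_card[OF r]
      mass_pos[OF faces_in_complex[OF r]] \<open>n < d\<close> by simp
  then show ?thesis
    unfolding down by (rule weighted_variance_le) (simp_all add: w_def mass_nonneg pairs)
qed

lemma down_variance_exp_le:
  assumes r: "r \<in> faces X n" and "n < d"
    and lipschitz: "\<And>a b. a \<in> link_vertices r \<Longrightarrow> b \<in> link_vertices r \<Longrightarrow>
      \<bar>G (insert a r) - G (insert b r)\<bar> \<le> L"
  shows "down n (\<lambda>s. exp (t * G s)) r - (down n (\<lambda>s. exp (t / 2 * G s)) r)^2
    \<le> t^2 * L^2 / 4 * down n (\<lambda>s. exp (t * G s)) r"
proof -
  have "(exp (t / 2 * G x) - exp (t / 2 * G y))^2 \<le> t^2 * L^2 / 4 * (exp (t * G x) + exp (t * G y))"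
    if "\<bar>G x - G y\<bar> \<le> L" for x y
  proof -
    have "(G x - G y)^2 \<le> L^2"
      using that by (simp add: abs_le_square_iff[symmetric] power2_le_iff_abs_le)
    have "(exp (t / 2 * G x) - exp (t / 2 * G y))^2
        \<le> (t / 2 * G x - t / 2 * G y)^2 * (exp (2 * (t / 2 * G x)) + exp (2 * (t / 2 * G y)))"
      by (rule exp_diff_square_le)
    also have "\<dots> = (t / 2)^2 * (G x - G y)^2 * (exp (t * G x) + exp (t * G y))"
      by (simp add: power2_eq_square algebra_simps)
    also have "\<dots> \<le> (t / 2)^2 * L^2 * (exp (t * G x) + exp (t * G y))"
      using \<open>(G x - G y)^2 \<le> L^2\<close> by (intro mult_right_mono mult_left_mono) auto
    finally show ?thesis by (simp add: power_divide)
  qed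
  moreover have "(exp (t / 2 * G s))^2 = exp (t * G s)" for s by (simp flip: exp_double)
  ultimately show ?thesis
    using down_variance_le[OF r \<open>n < d\<close>, of "\<lambda>s. exp (t / 2 * G s)" "t^2 * L^2 / 4" "\<lambda>s. exp (t * G s)"]
      lipschitz by simp
qed

lemma exp_moment_halving:
  assumes "Suc n \<le> d" "0 \<le> \<gamma>" "\<gamma> < 1"
    and bound: "\<And>r. r \<in> X \<Longrightarrow> card r < n \<Longrightarrow> link_quadratic_bound \<gamma> r"
    and lipschitz: "\<And>r a b. r \<in> faces X n \<Longrightarrow> a \<in> link_vertices r \<Longrightarrow> b \<in> link_vertices r \<Longrightarrow>
      \<bar>G (insert a r) - G (insert b r)\<bar> \<le> L"
  shows "expect (Suc n) (\<lambda>s. exp (t * G s)) * (1 - real (Suc n) / (1 - \<gamma>)^n * L^2 / 4 * t^2)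
     \<le> (expect (Suc n) (\<lambda>s. exp (t / 2 * G s)))^2"
proof -
  have "n < d" using assms(1) by simp
  define F where "F s = exp (t / 2 * G s)" for s
  define E where "E s = exp (t * G s)" for s
  define c where "c = (1 - \<gamma>)^n / real (Suc n)"
  have "c > 0" unfolding c_def using \<open>\<gamma> < 1\<close> by simp
  have "(F s)^2 = E s" for s unfolding F_def E_def by (simp flip: exp_double)
  then have "c * (expect (Suc n) E - (expect (Suc n) F)^2)
      \<le> expect (Suc n) E - expect n (\<lambda>r. (down n F r)^2)"
    using variance_le_down_gap[OF assms(1,2) _ bound, of F] \<open>\<gamma> < 1\<close> unfolding c_def by simp
  also have "\<dots> = expect n (\<lambda>r. down n E r - (down n F r)^2)"
    unfolding expect_diff expect_Suc_eq_expect_down[OF \<open>n < d\<close>] ..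
  also have "\<dots> \<le> expect n (\<lambda>r. t^2 * L^2 / 4 * down n E r)"
    unfolding E_def F_def using lipschitz
    by (intro expect_mono down_variance_exp_le[OF _ \<open>n < d\<close>]) auto
  also have "\<dots> = t^2 * L^2 / 4 * expect (Suc n) E"
    unfolding expect_cmult expect_Suc_eq_expect_down[OF \<open>n < d\<close>] ..
  finally have "expect (Suc n) E - (expect (Suc n) F)^2 \<le> t^2 * L^2 / 4 / c * expect (Suc n) E"
    using \<open>c > 0\<close> by (simp add: field_simps)
  then show ?thesis unfolding E_def F_def c_def by (simp add: field_simps)
qed

lemma exp_moment_small:
  assumes "i \<le> d" "\<bar>s\<bar> \<le> 1" "\<And>x. x \<in> faces X i \<Longrightarrow> \<bar>G x\<bar> \<le> 1" "expect i G = 0"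
  shows "expect i (\<lambda>x. exp (s * G x)) \<le> 1 + s^2"
proof -
  have "expect i (\<lambda>x. exp (s * G x)) \<le> expect i (\<lambda>x. 1 + s * G x + s^2)"
  proof (rule expect_mono)
    fix x assume x: "x \<in> faces X i"
    have "\<bar>s * G x\<bar> \<le> 1" using assms(2) assms(3)[OF x] by (simp add: abs_mult mult_le_one)
    moreover have "(s * G x)^2 \<le> s^2"
      using assms(3)[OF x] abs_le_square_iff[of "G x" 1] by (simp add: power_mult_distrib mult_left_le)
    ultimately show "exp (s * G x) \<le> 1 + s * G x + s^2" using exp_le_quadratic by fastforce
  qed
  also have "\<dots> = 1 + s^2" unfolding expect_add expect_cmult expect_const[OF assms(1)] assms(4) by simp
  finally show ?thesis .
qed

text \<open>A Herbst-type argument: iterating the halving inequality down to tiny \<open>t\<close>, where the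
  exponential moment is \<open>1 + O(t\<^sup>2)\<close>.\<close>
lemma exp_moment_le:
  assumes "Suc n \<le> d" "0 \<le> \<gamma>" "\<gamma> < 1"
    and "\<And>r. r \<in> X \<Longrightarrow> card r < n \<Longrightarrow> link_quadratic_bound \<gamma> r"
    and "\<And>r a b. r \<in> faces X n \<Longrightarrow> a \<in> link_vertices r \<Longrightarrow> b \<in> link_vertices r \<Longrightarrow>
      \<bar>G (insert a r) - G (insert b r)\<bar> \<le> L"
    and "expect (Suc n) G = 0" and "\<And>x. x \<in> faces X (Suc n) \<Longrightarrow> \<bar>G x\<bar> \<le> 1"
    and "t \<ge> 0" and "real (Suc n) / (1 - \<gamma>)^n * L^2 / 4 * t^2 \<le> 1/16"
  shows "expect (Suc n) (\<lambda>s. exp (t * G s)) \<le> exp (1/2)"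
proof (rule squaring_recursion_le_exp_half[where \<kappa> = "real (Suc n) / (1 - \<gamma>)^n * L^2 / 4"
      and \<Lambda> = "\<lambda>t. expect (Suc n) (\<lambda>s. exp (t * G s))"])
  show "expect (Suc n) (\<lambda>s. exp (t * G s)) * (1 - real (Suc n) / (1 - \<gamma>)^n * L^2 / 4 * t^2)
      \<le> (expect (Suc n) (\<lambda>s. exp (t / 2 * G s)))^2" for t
    using exp_moment_halving[where G = G and L = L, OF assms(1-5)] by (simp add: mult.assoc)
  show "expect (Suc n) (\<lambda>s. exp (s' * G s)) \<le> 1 + s'^2" if "\<bar>s'\<bar> \<le> 1" for s'
    using exp_moment_small[OF assms(1) that assms(7,6)] .
qed (use assms in \<open>auto intro: expect_nonneg\<close>)

lemma lift_Suc_eq_up: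
  assumes "1 \<le> i" and s: "s \<in> faces X (Suc i)"
  shows "lift (Suc i) g s = up i (lift i g) s"
proof -
  have fs: "finite s" and cs: "card s = Suc i" using s by (auto simp: faces_finite faces_card)
  define S where "S = (\<Sum>v\<in>s. g v)"
  have "(\<Sum>a\<in>s. lift i g (s - {a})) = (\<Sum>a\<in>s. (S - g a) / real i)"
    unfolding lift_def S_def using fs by (intro sum.cong refl) (simp add: sum_diff1)
  also have "\<dots> = (real (card s) * S - S) / real i"
    by (simp add: sum_divide_distrib[symmetric] sum_subtractf S_def)
  also have "\<dots> = S" using cs \<open>1 \<le> i\<close> by (simp add: field_simps)
  finally show ?thesis unfolding up_def lift_def S_def by simp
qed

lemma exp_up_le_up_exp:
  assumes s: "s \<in> faces X (Suc i)"
  shows "exp (t * (up i H s - \<mu>)) \<le> up i (\<lambda>q. exp (t * (H q - \<mu>))) s"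
proof -
  have fs: "finite s" and cs: "card s = Suc i" using s by (auto simp: faces_finite faces_card)
  have "s \<noteq> {}" using cs by auto
  have "t * (up i H s - \<mu>) = (\<Sum>a\<in>s. (1 / real (Suc i)) *\<^sub>R (t * (H (s - {a}) - \<mu>)))"
    unfolding up_def using cs
    by (simp add: sum_distrib_left sum_subtractf sum_divide_distrib[symmetric] field_simps)
  also have "exp \<dots> \<le> (\<Sum>a\<in>s. (1 / real (Suc i)) * exp (t * (H (s - {a}) - \<mu>)))"
    by (rule convex_on_sum[OF fs \<open>s \<noteq> {}\<close> exp_convex]) (auto simp: cs)
  also have "\<dots> = up i (\<lambda>q. exp (t * (H q - \<mu>))) s"
    unfolding up_def by (simp add: sum_divide_distrib)
  finally show ?thesis .
qed

lemma exp_moment_lift_mono: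
  assumes "1 \<le> m" "m \<le> k" "k \<le> d"
  shows "expect k (\<lambda>s. exp (t * (lift k g s - \<mu>))) \<le> expect m (\<lambda>s. exp (t * (lift m g s - \<mu>)))"
  using assms(2,3)
proof (induction k rule: dec_induct)
  case (step k)
  have "expect (Suc k) (\<lambda>s. exp (t * (lift (Suc k) g s - \<mu>)))
      \<le> expect (Suc k) (up k (\<lambda>q. exp (t * (lift k g q - \<mu>))))"
    using step assms(1) by (intro expect_mono) (simp add: lift_Suc_eq_up exp_up_le_up_exp)
  also have "\<dots> = expect k (\<lambda>s. exp (t * (lift k g s - \<mu>)))"
    using step by (intro expect_up) simp
  finally show ?case using step by simp
qed simp

lemma expect_lift:
  assumes "1 \<le> k" "k \<le> d"
  shows "expect k (lift k g) = expect 1 (lift 1 g)"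
  using assms
proof (induction k rule: dec_induct)
  case (step k)
  have "expect (Suc k) (lift (Suc k) g) = expect (Suc k) (up k (lift k g))"
    using step by (intro expect_cong) (simp add: lift_Suc_eq_up)
  also have "\<dots> = expect k (lift k g)" using step by (intro expect_up) simp
  finally show ?case using step by simp
qed simp

lemma lift_insert_diff_le:
  assumes g01: "\<forall>v. {v} \<in> X \<longrightarrow> 0 \<le> g v \<and> g v \<le> 1"
    and r: "r \<in> faces X n" and a: "a \<in> link_vertices r" and b: "b \<in> link_vertices r"
  shows "\<bar>lift (Suc n) g (insert a r) - lift (Suc n) g (insert b r)\<bar> \<le> 1 / real (Suc n)"
proof -
  have "{a} \<in> X" "{b} \<in> X" using a b face_subset_closed unfolding link_vertices_def by auto
  then have "0 \<le> g a" "g a \<le> 1" "0 \<le> g b" "g b \<le> 1" using g01 by auto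
  then have "\<bar>g a - g b\<bar> \<le> 1" by simp
  moreover have "lift (Suc n) g (insert a r) - lift (Suc n) g (insert b r) = (g a - g b) / real (Suc n)"
    using a b faces_finite[OF r] faces_card[OF r] unfolding lift_def link_vertices_def
    by (simp add: diff_divide_distrib[symmetric])
  ultimately show ?thesis by (simp add: divide_right_mono)
qed

lemma lift_bounds:
  assumes g01: "\<forall>v. {v} \<in> X \<longrightarrow> 0 \<le> g v \<and> g v \<le> 1"
    and s: "s \<in> faces X k" and "1 \<le> k"
  shows "0 \<le> lift k g s \<and> lift k g s \<le> 1"
proof -
  have g: "0 \<le> g v \<and> g v \<le> 1" if "v \<in> s" for v
    using g01 face_subset_closed[OF faces_in_complex[OF s]] that by auto
  have "0 \<le> (\<Sum>v\<in>s. g v)" using g by (auto intro: sum_nonneg)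
  moreover have "(\<Sum>v\<in>s. g v) \<le> (\<Sum>v\<in>s. 1)" using g by (intro sum_mono) auto
  ultimately show ?thesis unfolding lift_def using faces_card[OF s] \<open>1 \<le> k\<close> by (simp add: divide_le_eq)
qed

lemma spectrally_independent_link_quadratic_bound:
  assumes "spectrally_independent X d p \<eta>" and "0 \<le> \<eta>"
    and r: "r \<in> X" "card r + 2 \<le> d" and "\<eta> / real (d - card r) \<le> \<gamma>" "\<gamma> < 1"
  shows "link_quadratic_bound \<gamma> r"
proof -
  have "r \<in> faces X (d - (d - card r))" "2 \<le> d - card r" "d - card r \<le> d"
    using r by (auto simp: mem_faces)
  moreover have "2 \<le> d - card r \<and> d - card r \<le> d \<longrightarrow> (\<forall>s\<in>faces X (d - (d - card r)).
      one_sided_expander (link_cx X s) (d - card r) (link_dist X d p s) (\<eta> / real (d - card r)))"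
    using assms(1) unfolding spectrally_independent_def by (rule spec)
  ultimately have "one_sided_expander (link_cx X r) (d - card r) (link_dist X d p r) (\<eta> / real (d - card r))"
    by blast
  then have "one_sided_expander (link_cx X r) (d - card r) (link_dist X d p r) \<gamma>"
    using assms(5) by (rule one_sided_expander_mono)
  then show ?thesis
    using r \<open>\<gamma> < 1\<close> one_sided_expander_imp_link_quadratic_bound[of r "card r"]
    by (simp add: mem_faces)
qed

text \<open>The bound is proved on level \<open>m\<close>, whose links are \<open>\<eta> / (d - m + 2)\<close>-expanders, and carried up
  to level \<open>k\<close> by Jensen.\<close>
lemma exp_moment_lift_le:
  assumes "0 \<le> \<eta>" and SI: "spectrally_independent X d p \<eta>"
    and "2 \<le> m" "m \<le> k" "k \<le> d" "8 * real m * max 1 \<eta> \<le> real d"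
    and g01: "\<forall>v. {v} \<in> X \<longrightarrow> 0 \<le> g v \<and> g v \<le> 1"
    and "0 \<le> t" "t^2 \<le> real m / 8"
  shows "expect k (\<lambda>s. exp (t * (lift k g s - expect k (lift k g)))) \<le> exp (1/2)"
proof -
  obtain n where m: "m = Suc n" using \<open>2 \<le> m\<close> by (cases m) auto
  define \<gamma> where "\<gamma> = \<eta> / real (d - m + 2)"
  note \<gamma> = link_parameter_bounds[OF \<open>2 \<le> m\<close> \<open>0 \<le> \<eta>\<close> assms(6), folded \<gamma>_def]
  have "m \<le> d" using assms(4,5) by simp
  have bound: "link_quadratic_bound \<gamma> r" if "r \<in> X" "card r < n" for r
  proof (rule spectrally_independent_link_quadratic_bound[OF SI \<open>0 \<le> \<eta>\<close> that(1)])
    show "card r + 2 \<le> d" using that(2) m \<open>m \<le> d\<close> by simp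
    have "real (d - m + 2) \<le> real (d - card r)" using that(2) m \<open>m \<le> d\<close> by simp
    then show "\<eta> / real (d - card r) \<le> \<gamma>"
      unfolding \<gamma>_def using \<open>0 \<le> \<eta>\<close> by (intro divide_left_mono) auto
  qed (use \<gamma> in simp)
  define \<mu> where "\<mu> = expect k (lift k g)"
  have \<mu>: "expect m (lift m g) = \<mu>"
    unfolding \<mu>_def using assms(3-5) expect_lift[of m g] expect_lift[of k g] by simp
  have "expect m (\<lambda>_. 0) \<le> expect m (lift m g)" "expect m (lift m g) \<le> expect m (\<lambda>_. 1)"
    using lift_bounds[OF g01 _, of _ m] \<open>2 \<le> m\<close> by (auto intro!: expect_mono)
  then have "0 \<le> \<mu> \<and> \<mu> \<le> 1" unfolding \<mu> expect_const[OF \<open>m \<le> d\<close>] by simp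
  define G where "G s = lift m g s - \<mu>" for s
  have "expect m (\<lambda>s. exp (t * G s)) \<le> exp (1/2)"
    unfolding m
  proof (rule exp_moment_le[where L = "1 / real m"])
    show "\<bar>G (insert a r) - G (insert b r)\<bar> \<le> 1 / real m"
      if "r \<in> faces X n" "a \<in> link_vertices r" "b \<in> link_vertices r" for r a b
      unfolding G_def m using lift_insert_diff_le[OF g01 that] by simp
    show "expect (Suc n) G = 0"
      unfolding G_def expect_diff m[symmetric] \<mu> expect_const[OF \<open>m \<le> d\<close>] by simp
    show "\<bar>G x\<bar> \<le> 1" if "x \<in> faces X (Suc n)" for x
      using lift_bounds[OF g01 that] \<open>0 \<le> \<mu> \<and> \<mu> \<le> 1\<close> unfolding G_def m by (auto simp: abs_le_iff)
    have "real (Suc n) / (1 - \<gamma>)^n * (1 / real m)^2 / 4 * t^2 = t^2 / (4 * real m * (1 - \<gamma>)^n)"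
      unfolding m by (simp add: power2_eq_square)
    also have "\<dots> \<le> (real m / 8) / (4 * real m * (6/7))"
      using \<gamma>(3) \<open>t^2 \<le> real m / 8\<close> \<open>2 \<le> m\<close> m by (intro frac_le mult_left_mono) auto
    also have "\<dots> \<le> 1/16" using \<open>2 \<le> m\<close> by simp
    finally show "real (Suc n) / (1 - \<gamma>)^n * (1 / real m)^2 / 4 * t^2 \<le> 1/16" .
    show "Suc n \<le> d" using m \<open>m \<le> d\<close> by simp
  qed (use \<gamma> bound \<open>0 \<le> t\<close> in simp_all)
  moreover have "expect k (\<lambda>s. exp (t * (lift k g s - \<mu>))) \<le> expect m (\<lambda>s. exp (t * G s))"
    unfolding G_def using assms(3-5) by (intro exp_moment_lift_mono) auto
  ultimately show ?thesis unfolding \<mu>_def by simp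
qed

section \<open>Tail bounds\<close>

lemma face_dist_nonneg: "0 \<le> face_dist X d p k s"
  unfolding face_dist_eq_mass by (intro divide_nonneg_nonneg mass_nonneg) simp

lemma tail_le_exp_moment:
  assumes "0 \<le> t"
  shows "(\<Sum>s\<in>{s \<in> faces X k. F s - \<mu> \<ge> \<epsilon>}. face_dist X d p k s)
    \<le> exp (- t * \<epsilon>) * expect k (\<lambda>s. exp (t * (F s - \<mu>)))"
proof -
  have "(\<Sum>s\<in>{s \<in> faces X k. F s - \<mu> \<ge> \<epsilon>}. face_dist X d p k s)
      \<le> (\<Sum>s\<in>{s \<in> faces X k. F s - \<mu> \<ge> \<epsilon>}. face_dist X d p k s * exp (t * (F s - \<mu>) - t * \<epsilon>))"
  proof (rule sum_mono)
    fix s assume "s \<in> {s \<in> faces X k. F s - \<mu> \<ge> \<epsilon>}"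
    then have "t * \<epsilon> \<le> t * (F s - \<mu>)" using \<open>0 \<le> t\<close> by (intro mult_left_mono) auto
    then have "1 \<le> exp (t * (F s - \<mu>) - t * \<epsilon>)" by simp
    from mult_left_mono[OF this face_dist_nonneg]
    show "face_dist X d p k s \<le> face_dist X d p k s * exp (t * (F s - \<mu>) - t * \<epsilon>)" by simp
  qed
  also have "\<dots> \<le> (\<Sum>s\<in>faces X k. face_dist X d p k s * exp (t * (F s - \<mu>) - t * \<epsilon>))"
    by (rule sum_mono2[OF finite_faces]) (auto intro: mult_nonneg_nonneg face_dist_nonneg)
  also have "\<dots> = (\<Sum>s\<in>faces X k. exp (- t * \<epsilon>) * (face_dist X d p k s * exp (t * (F s - \<mu>))))"
  proof (rule sum.cong[OF refl])
    fix s
    have "exp (t * (F s - \<mu>) - t * \<epsilon>) = exp (- t * \<epsilon>) * exp (t * (F s - \<mu>))"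
      by (simp flip: exp_add)
    then show "face_dist X d p k s * exp (t * (F s - \<mu>) - t * \<epsilon>)
        = exp (- t * \<epsilon>) * (face_dist X d p k s * exp (t * (F s - \<mu>)))" by simp
  qed
  also have "\<dots> = exp (- t * \<epsilon>) * expect k (\<lambda>s. exp (t * (F s - \<mu>)))"
    unfolding expect_eq_sum_face_dist by (simp only: sum_distrib_left)
  finally show ?thesis .
qed

lemma sum_face_dist_le_one:
  assumes "k \<le> d" "A \<subseteq> faces X k"
  shows "(\<Sum>s\<in>A. face_dist X d p k s) \<le> 1"
proof -
  have "(\<Sum>s\<in>A. face_dist X d p k s) \<le> (\<Sum>s\<in>faces X k. face_dist X d p k s)"
    by (rule sum_mono2[OF finite_faces assms(2)]) (rule face_dist_nonneg)
  also have "\<dots> = 1"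
    using expect_const[OF assms(1), of 1] unfolding expect_eq_sum_face_dist by simp
  finally show ?thesis .
qed

lemma deviation_of_lift_le_one:
  assumes g01: "\<forall>v. {v} \<in> X \<longrightarrow> 0 \<le> g v \<and> g v \<le> 1"
    and s: "s \<in> faces X k" and deviation: "lift k g s - expect k (lift k g) \<ge> \<epsilon>" and "0 < \<epsilon>"
  shows "\<epsilon> \<le> 1"
proof -
  have "1 \<le> k"
  proof (rule ccontr)
    assume "\<not> 1 \<le> k"
    then have "lift k g = (\<lambda>_. 0)" by (simp add: lift_def fun_eq_iff)
    then show False using deviation \<open>0 < \<epsilon>\<close> by (simp add: expect_def)
  qed
  then have "lift k g s \<le> 1" "0 \<le> expect k (lift k g)"
    using lift_bounds[OF g01 s] lift_bounds[OF g01 _, of _ k] by (auto intro!: expect_nonneg)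
  then show ?thesis using deviation by linarith
qed

lemma upper_tail_bound_large_k:
  assumes "0 < \<eta>" "spectrally_independent X d p \<eta>" "k \<le> d"
    and g01: "\<forall>v. {v} \<in> X \<longrightarrow> 0 \<le> g v \<and> g v \<le> 1" and "144 * max 1 \<eta> < real k"
  shows "(\<Sum>s\<in>{s \<in> faces X k. lift k g s - expect k (lift k g) \<ge> \<epsilon>}. face_dist X d p k s)
    \<le> 4 * exp (- (1 / (12 * max 1 (sqrt \<eta>))) * \<epsilon> * sqrt (real k))"
proof -
  define M where "M = max 1 (sqrt \<eta>)"
  have "1 \<le> M" "M^2 = max 1 \<eta>" unfolding M_def using \<open>0 < \<eta>\<close> by (auto simp: max_def)
  then obtain m where m: "2 \<le> m" "8 * real m * M^2 \<le> real k" "real k / (144 * M^2) \<le> real m / 8"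
    using exists_lift_level[OF \<open>1 \<le> M\<close>] assms(5) by metis
  have "8 * real m * 1 \<le> 8 * real m * M^2" using \<open>1 \<le> M\<close> by (intro mult_left_mono) auto
  then have "m \<le> k" using m(2) by simp
  have "8 * real m * max 1 \<eta> \<le> real d" using m(2) \<open>M^2 = max 1 \<eta>\<close> \<open>k \<le> d\<close> by simp
  define t where "t = 1 / (12 * M) * sqrt (real k)"
  have "0 \<le> t" unfolding t_def M_def by simp
  have "t^2 = real k / (144 * M^2)" unfolding t_def by (simp add: power_mult_distrib power_divide)
  then have "t^2 \<le> real m / 8" using m(3) by simp
  have "(\<Sum>s\<in>{s \<in> faces X k. lift k g s - expect k (lift k g) \<ge> \<epsilon>}. face_dist X d p k s)
      \<le> exp (- t * \<epsilon>) * expect k (\<lambda>s. exp (t * (lift k g s - expect k (lift k g))))"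
    by (rule tail_le_exp_moment[OF \<open>0 \<le> t\<close>])
  also have "\<dots> \<le> exp (- t * \<epsilon>) * exp (1/2)"
    using exp_moment_lift_le[OF _ assms(2) m(1) \<open>m \<le> k\<close> \<open>k \<le> d\<close> \<open>8 * real m * max 1 \<eta> \<le> real d\<close>
        g01 \<open>0 \<le> t\<close> \<open>t^2 \<le> real m / 8\<close>] assms(1)
    by (intro mult_left_mono) simp_all
  also have "\<dots> \<le> exp (- t * \<epsilon>) * 4"
    using exp_bound[of "1/2::real"] by (intro mult_left_mono) (simp_all add: power2_eq_square)
  finally show ?thesis unfolding t_def M_def by (simp add: mult_ac)
qed

lemma upper_tail_bound:
  assumes "0 < \<eta>" "spectrally_independent X d p \<eta>" "k \<le> d"
    and g01: "\<forall>v. {v} \<in> X \<longrightarrow> 0 \<le> g v \<and> g v \<le> 1" and "0 < \<epsilon>"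
  shows "(\<Sum>s\<in>{s \<in> faces X k. lift k g s - expect k (lift k g) \<ge> \<epsilon>}. face_dist X d p k s)
    \<le> 4 * exp (- (1 / (12 * max 1 (sqrt \<eta>))) * \<epsilon> * sqrt (real k))"
    (is "sum _ ?A \<le> 4 * exp (- ?c * \<epsilon> * sqrt (real k))")
proof (cases "?A = {}")
  case False
  then obtain s where "s \<in> faces X k" "lift k g s - expect k (lift k g) \<ge> \<epsilon>" by blast
  note eps_le_1 = deviation_of_lift_le_one[OF g01 this \<open>0 < \<epsilon>\<close>]
  show ?thesis
  proof (cases "144 * max 1 \<eta> < real k")
    case True
    then show ?thesis using upper_tail_bound_large_k[OF assms(1-4)] by blast
  next
    case False
    have "sqrt (real k) \<le> sqrt (144 * max 1 \<eta>)" using False by simp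
    also have "\<dots> = 12 * max 1 (sqrt \<eta>)"
      using \<open>0 < \<eta>\<close> by (simp add: real_sqrt_mult max_def)
    finally have "\<epsilon> * (?c * sqrt (real k)) \<le> 1 * 1"
      using eps_le_1 \<open>0 < \<epsilon>\<close> by (intro mult_mono) (simp_all add: field_simps)
    then have "?c * \<epsilon> * sqrt (real k) \<le> 1" by (simp add: mult_ac)
    have "sum (face_dist X d p k) ?A \<le> 1" by (rule sum_face_dist_le_one[OF \<open>k \<le> d\<close>]) auto
    also have "1 \<le> 4 * exp (- 1 :: real)"
      using exp_bound[of "1::real"] by (simp add: exp_minus field_simps)
    also have "\<dots> \<le> 4 * exp (- ?c * \<epsilon> * sqrt (real k))"
      using \<open>?c * \<epsilon> * sqrt (real k) \<le> 1\<close> by simp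
    finally show ?thesis .
  qed
next
  case True
  show ?thesis unfolding True by simp
qed

lemma lower_tail_eq_upper_tail_complement:
  assumes "k \<le> d" "0 < \<epsilon>"
  shows "{s \<in> faces X k. lift k g s - expect k (lift k g) \<le> - \<epsilon>}
    = {s \<in> faces X k. lift k (\<lambda>v. 1 - g v) s - expect k (lift k (\<lambda>v. 1 - g v)) \<ge> \<epsilon>}"
proof (cases "k = 0")
  case True
  then show ?thesis using \<open>0 < \<epsilon>\<close> by (simp add: lift_def expect_def)
next
  case False
  have complement: "lift k (\<lambda>v. 1 - g v) s = 1 - lift k g s" if "s \<in> faces X k" for s
    using faces_card[OF that] False unfolding lift_def by (simp add: sum_subtractf diff_divide_distrib)
  then have "expect k (lift k (\<lambda>v. 1 - g v)) = 1 - expect k (lift k g)"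
    using expect_cong[of k "lift k (\<lambda>v. 1 - g v)" "\<lambda>s. 1 - lift k g s"]
    by (simp add: expect_diff expect_const[OF \<open>k \<le> d\<close>])
  with complement show ?thesis by auto
qed

end

theorem mainTheorem3:
  fixes X :: "'a set set" and d k :: nat and p :: "'a set \<Rightarrow> real"
    and g :: "'a \<Rightarrow> real" and \<eta> \<epsilon> :: real
  assumes "\<eta> > 0"
    and "uniform_complex X d"
    and "full_support_dist X d p"
    and "spectrally_independent X d p \<eta>"
    and "k \<le> d"
    and "\<forall>v. {v} \<in> X \<longrightarrow> 0 \<le> g v \<and> g v \<le> 1"
    and "\<epsilon> > 0"
  shows "let f = lift k g;
             E = (\<Sum>s\<in>faces X k. face_dist X d p k s * f s);
             c = 1 / (12 * max 1 (sqrt \<eta>))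
         in (\<Sum>s\<in>{s \<in> faces X k. f s - E \<ge> \<epsilon>}. face_dist X d p k s) \<le> 4 * exp (- c * \<epsilon> * sqrt (real k))
          \<and> (\<Sum>s\<in>{s \<in> faces X k. f s - E \<le> - \<epsilon>}. face_dist X d p k s) \<le> 4 * exp (- c * \<epsilon> * sqrt (real k))"
proof -
  interpret weighted_complex X d p using assms(2,3) by unfold_locales
  have "\<forall>v. {v} \<in> X \<longrightarrow> 0 \<le> 1 - g v \<and> 1 - g v \<le> 1" using assms(6) by auto
  from upper_tail_bound[OF assms(1,4,5) this assms(7)]
  have "(\<Sum>s\<in>{s \<in> faces X k. lift k g s - expect k (lift k g) \<le> - \<epsilon>}. face_dist X d p k s)
      \<le> 4 * exp (- (1 / (12 * max 1 (sqrt \<eta>))) * \<epsilon> * sqrt (real k))"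
    unfolding lower_tail_eq_upper_tail_complement[OF assms(5,7)] .
  then show ?thesis
    using upper_tail_bound[OF assms(1,4,5,6,7)] unfolding Let_def expect_eq_sum_face_dist by simp
qed

end
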